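(* Fix $\rho<1$. There exist constants $K,c>0$ (depending only on $\rho$) such that the following holds for all sufficiently large integers $t$. Let $n$ be an integer with $Kt/\log t\leq n\leq Kt/\log t+2$ and let $H$ be any $3$-regular graph on $n$ vertices whose transition matrix has all eigenvalues other than $1$ of absolute value at most $\rho$. Let $G_t$ be the graph obtained from the half-line $\mathbb{N}=\{0,1,2,\ldots\}$ (edges between consecutive integers) by adding a copy of $H$ and a single edge joining $0$ to some vertex of $H$ (so that $0$ has degree $2$). Then simple random walk on $G_t$ satisfies $$\mathbb{P}_0(\tau_0=t\mid\tau_0\geq t)\geq\frac{c\log t}{t}.$$
   Context: $\tau_0=\min\{s\geq1:X_s=0\}$ for simple random walk $(X_s)$ on $G_t$ started at $0$. *)

theory Defs
  imports "HOL-Probability.Probability" "Jordan_Normal_Form.Char_Poly"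
begin

definition srw_step :: "('a \<Rightarrow> 'a \<Rightarrow> bool) \<Rightarrow> 'a \<Rightarrow> 'a pmf" where
  "srw_step adj x = pmf_of_set {y. adj x y}"

fun srw_path :: "('a \<Rightarrow> 'a \<Rightarrow> bool) \<Rightarrow> 'a \<Rightarrow> nat \<Rightarrow> 'a list pmf" where
  "srw_path adj x0 0 = return_pmf [x0]"
| "srw_path adj x0 (Suc s) =
     bind_pmf (srw_path adj x0 s) (\<lambda>p. map_pmf (\<lambda>y. p @ [y]) (srw_step adj (last p)))"

definition return_time_eq :: "('a \<Rightarrow> 'a \<Rightarrow> bool) \<Rightarrow> 'a \<Rightarrow> nat \<Rightarrow> real" where
  "return_time_eq adj x0 t = measure_pmf.prob (srw_path adj x0 t)
     {p. p ! t = x0 \<and> (\<forall>s\<in>{1..<t}. p ! s \<noteq> x0)}"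

definition return_time_ge :: "('a \<Rightarrow> 'a \<Rightarrow> bool) \<Rightarrow> 'a \<Rightarrow> nat \<Rightarrow> real" where
  "return_time_ge adj x0 t = measure_pmf.prob (srw_path adj x0 t)
     {p. \<forall>s\<in>{1..<t}. p ! s \<noteq> x0}"

definition three_regular :: "nat \<Rightarrow> (nat \<Rightarrow> nat \<Rightarrow> bool) \<Rightarrow> bool" where
  "three_regular n E \<longleftrightarrow>
     (\<forall>i<n. \<forall>j<n. E i j \<longleftrightarrow> E j i) \<and> (\<forall>i<n. \<not> E i i) \<and>
     (\<forall>i<n. card {j. j < n \<and> E i j} = 3)"

definition trans_mat3 :: "nat \<Rightarrow> (nat \<Rightarrow> nat \<Rightarrow> bool) \<Rightarrow> complex mat" where
  "trans_mat3 n E = mat n n (\<lambda>(i,j). if E i j then 1/3 else 0)"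

(* All eigenvalues other than (one copy of) the trivial eigenvalue 1 have modulus
   at most rho: 1 has algebraic multiplicity at most 1, and every other eigenvalue
   has modulus at most rho. *)
definition nontrivial_eigs_bounded :: "complex mat \<Rightarrow> real \<Rightarrow> bool" where
  "nontrivial_eigs_bounded A \<rho> \<longleftrightarrow>
     order 1 (char_poly A) \<le> 1 \<and> (\<forall>\<mu>. eigenvalue A \<mu> \<and> \<mu> \<noteq> 1 \<longrightarrow> cmod \<mu> \<le> \<rho>)"

(* G_t: half-line (Inl k) plus a copy of H (Inr i, i<n), with one edge Inl 0 -- Inr v *)
definition Gt_adj :: "nat \<Rightarrow> (nat \<Rightarrow> nat \<Rightarrow> bool) \<Rightarrow> nat \<Rightarrow> nat + nat \<Rightarrow> nat + nat \<Rightarrow> bool" where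
  "Gt_adj n E v x y = (case (x, y) of
      (Inl a, Inl b) \<Rightarrow> b = a + 1 \<or> a = b + 1
    | (Inl a, Inr j) \<Rightarrow> a = 0 \<and> j = v
    | (Inr i, Inl b) \<Rightarrow> b = 0 \<and> i = v
    | (Inr i, Inr j) \<Rightarrow> i < n \<and> j < n \<and> E i j)"

end

(*
  Leaving 0, the walk enters either the half-line or the expander H (through v). On the
  half-line it survives t steps only with probability O(1/sqrt t) (gambler's ruin). In H the
  spectral gap makes the walk mix within O(log n) steps, so until it leaves H through the edge
  v -- 0 it is killed at rate at most about 1/n per step: from v it survives t steps with
  probability of order (1 - 1/n)^t, which is at least t^(-1/4) when n >= 8 t / log t and so
  dominates the half-line. Conditioned on survival, the mixed walk is at v at time t - 1 with
  probability about 1/n and then returns to 0 with probability 1/4, giving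
  P(tau_0 = t | tau_0 >= t) >= c / n ~ c log t / t.
  The survival bound comes from a Lyapunov function built from the Green function of H; the
  return bound from counting the visits to v, each of which costs a factor 3/4.
*)

theory Submission
  imports Defs "Jordan_Normal_Form.Spectral_Radius" "Jordan_Normal_Form.Jordan_Normal_Form_Uniqueness"
    "HOL-Real_Asymp.Real_Asymp"
begin

section \<open>Walks killed on returning to their starting point\<close>

lemma integral_bind_pmf_bounded:
  fixes f :: "'b \<Rightarrow> real"
  assumes "\<And>x. \<bar>f x\<bar> \<le> B"
  shows "measure_pmf.expectation (bind_pmf p q) f =
    measure_pmf.expectation p (\<lambda>x. measure_pmf.expectation (q x) f)"
  unfolding measure_pmf_bind
  by (rule integral_bind[where K="count_space UNIV" and B=B and B'=1])
    (use assms in \<open>auto simp: measure_pmf_in_subprob_algebra\<close>)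

lemma integral_cong_set_pmf:
  fixes f g :: "'b \<Rightarrow> real"
  assumes "\<And>x. x \<in> set_pmf M \<Longrightarrow> f x = g x"
  shows "measure_pmf.expectation M f = measure_pmf.expectation M g"
  by (rule integral_cong_AE) (auto simp: AE_measure_pmf_iff assms)

lemma abs_integral_pmf_le:
  fixes f :: "'b \<Rightarrow> real"
  assumes "\<And>x. \<bar>f x\<bar> \<le> B"
  shows "\<bar>measure_pmf.expectation M f\<bar> \<le> B"
proof -
  have "integrable M f"
    using assms by (intro measure_pmf.integrable_const_bound[where B=B]) auto
  then have "measure_pmf.expectation M (\<lambda>x. \<bar>f x\<bar>) \<le> B"
    using assms by (intro measure_pmf.integral_le_const) auto
  then show ?thesis
    using integral_abs_bound[of M f] by linarith
qed

definition killed_op :: "('a \<Rightarrow> 'a \<Rightarrow> bool) \<Rightarrow> 'a \<Rightarrow> ('a \<Rightarrow> real) \<Rightarrow> 'a \<Rightarrow> real" where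
  "killed_op adj x0 g x = measure_pmf.expectation (srw_step adj x) (\<lambda>y. if y = x0 then 0 else g y)"

definition avoids :: "'a \<Rightarrow> nat \<Rightarrow> 'a list \<Rightarrow> bool" where
  "avoids x0 k p \<longleftrightarrow> (\<forall>s\<in>{1..k}. p ! s \<noteq> x0)"

lemma length_srw_path: "p \<in> set_pmf (srw_path adj x0 k) \<Longrightarrow> length p = Suc k"
  by (induction k arbitrary: p) auto

lemma abs_killed_op_le:
  assumes "\<And>y. \<bar>g y\<bar> \<le> B"
  shows "\<bar>killed_op adj x0 g x\<bar> \<le> B"
  unfolding killed_op_def
  by (rule abs_integral_pmf_le) (use assms order_trans[OF abs_ge_zero assms] in auto)

lemma killed_op_eq_sum:
  assumes "finite {y. adj x y}" "{y. adj x y} \<noteq> {}"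
  shows "killed_op adj x0 g x = (\<Sum>y | adj x y. if y = x0 then 0 else g y) / card {y. adj x y}"
  unfolding killed_op_def srw_step_def using assms by (simp add: integral_pmf_of_set)

lemma avoids_snoc:
  assumes "length p = Suc k"
  shows "avoids x0 (Suc k) (p @ [y]) \<longleftrightarrow> avoids x0 k p \<and> y \<noteq> x0"
proof -
  have "{1..Suc k} = insert (Suc k) {1..k}" by auto
  then show ?thesis
    using assms by (auto simp: avoids_def nth_append)
qed

lemma integral_srw_path_snoc:
  fixes F :: "'a list \<Rightarrow> real"
  assumes "\<And>p. \<bar>F p\<bar> \<le> B"
  shows "measure_pmf.expectation (srw_path adj x0 (Suc k)) F =
    measure_pmf.expectation (srw_path adj x0 k)
      (\<lambda>p. measure_pmf.expectation (srw_step adj (last p)) (\<lambda>y. F (p @ [y])))"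
  by (simp only: srw_path.simps integral_bind_pmf_bounded[OF assms] integral_map_pmf)

lemma integral_srw_path_avoids:
  assumes "\<And>y. \<bar>g y\<bar> \<le> B"
  shows "measure_pmf.expectation (srw_path adj x0 k) (\<lambda>p. if avoids x0 k p then g (last p) else 0)
     = (killed_op adj x0 ^^ k) g x0"
  using assms
proof (induction k arbitrary: g)
  case 0
  then show ?case by (simp add: avoids_def)
next
  case (Suc k)
  have bound: "\<bar>(if avoids x0 (Suc k) p then g (last p) else 0)\<bar> \<le> B" for p
    using Suc.prems[of "last p"] Suc.prems[of x0] by auto
  have "measure_pmf.expectation (srw_path adj x0 (Suc k))
      (\<lambda>p. if avoids x0 (Suc k) p then g (last p) else 0)
    = measure_pmf.expectation (srw_path adj x0 k)
      (\<lambda>p. if avoids x0 k p then killed_op adj x0 g (last p) else 0)"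
    by (subst integral_srw_path_snoc[OF bound])
      (auto intro!: integral_cong_set_pmf simp: avoids_snoc length_srw_path killed_op_def
        cong: if_cong)
  also have "\<dots> = (killed_op adj x0 ^^ k) (killed_op adj x0 g) x0"
    by (rule Suc.IH) (rule abs_killed_op_le, rule Suc.prems)
  finally show ?case
    by (simp add: funpow_Suc_right del: funpow.simps)
qed

lemma prob_srw_path_avoids:
  "measure_pmf.prob (srw_path adj x0 (Suc k)) {p. (\<forall>s\<in>{1..<Suc k}. p ! s \<noteq> x0) \<and> p ! Suc k \<in> B}
     = (killed_op adj x0 ^^ k) (\<lambda>x. measure_pmf.prob (srw_step adj x) B) x0"
    (is "measure_pmf.prob _ ?S = _")
proof -
  have last_step: "indicator ?S (p @ [y]) = (if avoids x0 k p then indicator B y else 0 :: real)"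
    if "length p = Suc k" for p y
    using that by (auto simp: avoids_def nth_append indicator_def)
  have "measure_pmf.prob (srw_path adj x0 (Suc k)) ?S
      = measure_pmf.expectation (srw_path adj x0 (Suc k)) (indicator ?S)"
    by simp
  also have "\<dots> = measure_pmf.expectation (srw_path adj x0 k)
      (\<lambda>p. if avoids x0 k p then measure_pmf.prob (srw_step adj (last p)) B else 0)"
  proof (subst integral_srw_path_snoc[where B=1], simp, rule integral_cong_set_pmf)
    fix p assume "p \<in> set_pmf (srw_path adj x0 k)"
    then show "measure_pmf.expectation (srw_step adj (last p)) (\<lambda>y. indicator ?S (p @ [y]))
        = (if avoids x0 k p then measure_pmf.prob (srw_step adj (last p)) B else 0)"
      by (simp only: last_step length_srw_path) simp
  qed
  also have "\<dots> = (killed_op adj x0 ^^ k) (\<lambda>x. measure_pmf.prob (srw_step adj x) B) x0"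
    by (rule integral_srw_path_avoids[where B=1]) simp
  finally show ?thesis .
qed

lemma return_time_ge_Suc:
  "return_time_ge adj x0 (Suc k) = (killed_op adj x0 ^^ k) (\<lambda>_. 1) x0"
  using prob_srw_path_avoids[of adj x0 k UNIV] by (simp add: return_time_ge_def)

lemma return_time_eq_Suc:
  "return_time_eq adj x0 (Suc k) =
     (killed_op adj x0 ^^ k) (\<lambda>x. measure_pmf.prob (srw_step adj x) {x0}) x0"
  using prob_srw_path_avoids[of adj x0 k "{x0}"] by (simp add: return_time_eq_def conj_commute)

section \<open>Simple random walk on the half-line\<close>

text \<open>Transition operators, acting on functions of the position \<open>a \<ge> 1\<close>, of simple random walk on
  \<open>\<nat>\<close> killed on hitting \<open>0\<close>, and killed on hitting \<open>0\<close> or \<open>L\<close>; values at the killing sites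
  are irrelevant.\<close>

definition halfline_op :: "(nat \<Rightarrow> real) \<Rightarrow> nat \<Rightarrow> real" where
  "halfline_op f a = (f (Suc a) + (if 2 \<le> a then f (a - 1) else 0)) / 2"

definition strip_op :: "nat \<Rightarrow> (nat \<Rightarrow> real) \<Rightarrow> nat \<Rightarrow> real" where
  "strip_op L f a = ((if Suc a < L then f (Suc a) else 0) + (if 2 \<le> a then f (a - 1) else 0)) / 2"

lemma halfline_op_pow_nonneg: "(\<And>b. 0 \<le> f b) \<Longrightarrow> 0 \<le> (halfline_op ^^ k) f a"
  by (induction k arbitrary: a) (auto simp: halfline_op_def)

lemma halfline_op_pow_one_le: "(halfline_op ^^ k) (\<lambda>_. 1) a \<le> 1"
proof (induction k arbitrary: a)
  case (Suc k)
  from Suc[of "Suc a"] Suc[of "a - 1"] show ?case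
    by (auto simp: halfline_op_def[of "(halfline_op ^^ k) (\<lambda>_. 1)"])
qed simp

lemma halfline_op_pow_cong:
  assumes "\<And>b. 1 \<le> b \<Longrightarrow> f b = g b" "1 \<le> a"
  shows "(halfline_op ^^ k) f a = (halfline_op ^^ k) g a"
  using assms(2) by (induction k arbitrary: a) (auto simp: assms(1) halfline_op_def)

lemma strip_op_pow_mono:
  assumes "\<And>b. 1 \<le> b \<Longrightarrow> b < L \<Longrightarrow> f b \<le> g b" "1 \<le> a" "a < L"
  shows "(strip_op L ^^ k) f a \<le> (strip_op L ^^ k) g a"
  using assms(2,3)
proof (induction k arbitrary: a)
  case (Suc k)
  then have "(if Suc a < L then (strip_op L ^^ k) f (Suc a) else 0)
      \<le> (if Suc a < L then (strip_op L ^^ k) g (Suc a) else 0)"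
    and "(if 2 \<le> a then (strip_op L ^^ k) f (a - 1) else 0)
      \<le> (if 2 \<le> a then (strip_op L ^^ k) g (a - 1) else 0)"
    by auto
  then show ?case
    by (simp add: strip_op_def[of L "(strip_op L ^^ k) f"] strip_op_def[of L "(strip_op L ^^ k) g"])
qed (simp add: assms(1))

lemma strip_op_pow_cong:
  assumes "\<And>b. 1 \<le> b \<Longrightarrow> b < L \<Longrightarrow> f b = g b" "1 \<le> a" "a < L"
  shows "(strip_op L ^^ k) f a = (strip_op L ^^ k) g a"
  using strip_op_pow_mono[of L f g a k] strip_op_pow_mono[of L g f a k] assms by force

lemma strip_op_pow_diff:
  "(strip_op L ^^ k) (\<lambda>b. f b - g b) = (\<lambda>a. (strip_op L ^^ k) f a - (strip_op L ^^ k) g a)"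
  by (induction k) (auto simp: strip_op_def[abs_def] field_simps)

lemma strip_op_pow_nonneg:
  assumes "\<And>b. 1 \<le> b \<Longrightarrow> b < L \<Longrightarrow> 0 \<le> f b" "1 \<le> a" "a < L"
  shows "0 \<le> (strip_op L ^^ k) f a"
proof -
  have "(strip_op L ^^ k) (\<lambda>_. 0) a = 0" for a
    by (induction k arbitrary: a) (auto simp: strip_op_def)
  then show ?thesis
    using strip_op_pow_mono[of L "\<lambda>_. 0" f a k] assms by auto
qed

lemma strip_op_pow_one_antimono:
  assumes "1 \<le> a" "a < L" "j \<le> k"
  shows "(strip_op L ^^ k) (\<lambda>_. 1) a \<le> (strip_op L ^^ j) (\<lambda>_. 1) a"
  using assms(3)
proof (induction rule: dec_induct)
  case (step i)
  have "(strip_op L ^^ Suc i) (\<lambda>_. 1) a = (strip_op L ^^ i) (strip_op L (\<lambda>_. 1)) a"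
    by (simp add: funpow_Suc_right del: funpow.simps)
  also have "\<dots> \<le> (strip_op L ^^ i) (\<lambda>_. 1) a"
    using assms by (intro strip_op_pow_mono) (auto simp: strip_op_def)
  finally show ?case
    using step.IH by linarith
qed simp

lemma strip_op_linear:
  assumes "1 \<le> a" "a < L"
  shows "strip_op L (\<lambda>b. real b / real L) a = real a / real L - (if Suc a = L then 1/2 else 0)"
proof (cases "Suc a < L")
  case True
  then show ?thesis
    using assms by (auto simp: strip_op_def field_simps of_nat_diff)
next
  case False
  then have L: "L = Suc a"
    using assms by simp
  show ?thesis
  proof (cases "a = 1")
    case False
    then have "strip_op L (\<lambda>b. real b / real L) a = real a / (real a + 1) - 1/2"
      using assms L by (simp add: strip_op_def of_nat_diff field_simps)
    then show ?thesis
      using L by simp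
  qed (simp add: L strip_op_def)
qed

text \<open>To survive on the half-line the walk must survive in the strip or reach \<open>L\<close> first; by
  the harmonic function \<open>b / L\<close> the latter has probability \<open>a / L\<close>.\<close>

lemma halfline_op_pow_le_strip_op_pow:
  assumes "1 \<le> a" "a < L"
  shows "(halfline_op ^^ k) (\<lambda>_. 1) a - real a / real L \<le> (strip_op L ^^ k) (\<lambda>_. 1) a"
  using assms
proof (induction k arbitrary: a)
  case (Suc k)
  let ?h = "(halfline_op ^^ k) (\<lambda>_. 1)"
  have "halfline_op ?h a \<le> strip_op L ?h a + (if Suc a = L then 1/2 else 0)"
    using Suc.prems halfline_op_pow_one_le[of k L] halfline_op_pow_one_le[of k "Suc a"]
    by (auto simp: halfline_op_def strip_op_def)
  then have "(halfline_op ^^ Suc k) (\<lambda>_. 1) a - real a / real L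
      \<le> strip_op L ?h a - strip_op L (\<lambda>b. real b / real L) a"
    using strip_op_linear[OF Suc.prems] by simp
  also have "\<dots> = strip_op L (\<lambda>b. ?h b - real b / real L) a"
    by (simp add: strip_op_def field_simps)
  also have "\<dots> \<le> (strip_op L ^^ Suc k) (\<lambda>_. 1) a"
    using Suc strip_op_pow_mono[of L "\<lambda>b. ?h b - real b / real L" "(strip_op L ^^ k) (\<lambda>_. 1)" a 1]
    by simp
  finally show ?case .
qed simp

text \<open>\<open>b (L - b)\<close> bounds the expected exit time from the strip.\<close>

lemma strip_op_quadratic:
  assumes "1 \<le> a" "a < L"
  shows "strip_op L (\<lambda>b. real b * (real L - real b)) a = real a * (real L - real a) - 1"
proof -
  consider "Suc a < L" "2 \<le> a" | "Suc a < L" "a = 1" | "Suc a = L" "2 \<le> a" | "Suc a = L" "a = 1"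
    using assms by linarith
  then show ?thesis
    by cases (auto simp: strip_op_def of_nat_diff field_simps)
qed

lemma sum_strip_op_pow_one_le:
  assumes "1 \<le> a" "a < L"
  shows "(\<Sum>k<m. (strip_op L ^^ k) (\<lambda>_. 1) a) \<le> real a * (real L - real a)"
proof -
  let ?q = "\<lambda>b. real b * (real L - real b)"
  have step: "(strip_op L ^^ k) ?q a - (strip_op L ^^ Suc k) ?q a = (strip_op L ^^ k) (\<lambda>_. 1) a" for k
  proof -
    have "(strip_op L ^^ Suc k) ?q a = (strip_op L ^^ k) (strip_op L ?q) a"
      by (simp add: funpow_Suc_right del: funpow.simps)
    also have "\<dots> = (strip_op L ^^ k) (\<lambda>b. ?q b - 1) a"
      using assms by (intro strip_op_pow_cong) (auto simp: strip_op_quadratic)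
    finally show ?thesis
      by (simp add: strip_op_pow_diff)
  qed
  have "(\<Sum>k<m. (strip_op L ^^ k) (\<lambda>_. 1) a) = ?q a - (strip_op L ^^ m) ?q a"
    by (induction m) (auto simp: step[symmetric])
  also have "\<dots> \<le> ?q a"
    using strip_op_pow_nonneg[of L ?q a m] assms by auto
  finally show ?thesis .
qed

lemma halfline_op_pow_one_le_strip:
  assumes "2 \<le> L" "m > 0"
  shows "(halfline_op ^^ m) (\<lambda>_. 1) 1 \<le> 1 / real L + (real L - 1) / real m"
proof -
  have "real m * (strip_op L ^^ m) (\<lambda>_. 1) 1 = (\<Sum>k<m. (strip_op L ^^ m) (\<lambda>_. 1) 1)"
    by simp
  also have "\<dots> \<le> (\<Sum>k<m. (strip_op L ^^ k) (\<lambda>_. 1) 1)"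
    using assms by (intro sum_mono strip_op_pow_one_antimono) auto
  also have "\<dots> \<le> real L - 1"
    using sum_strip_op_pow_one_le[of 1 L m] assms by simp
  finally have "(strip_op L ^^ m) (\<lambda>_. 1) 1 \<le> (real L - 1) / real m"
    using assms by (simp add: field_simps)
  with halfline_op_pow_le_strip_op_pow[of 1 L m] assms show ?thesis
    by simp
qed

text \<open>Optimising over \<open>L \<approx> \<surd>m\<close> gives the gambler's ruin estimate.\<close>

lemma halfline_op_pow_one_le_sqrt:
  assumes "2 \<le> m"
  shows "(halfline_op ^^ m) (\<lambda>_. 1) 1 \<le> 2 / sqrt (real m)"
proof -
  define L where "L = nat \<lceil>sqrt (real m)\<rceil>"
  have s1: "sqrt (real m) > 1"
    using assms by simp
  have "real L = of_int \<lceil>sqrt (real m)\<rceil>"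
    unfolding L_def by (simp add: less_imp_le)
  then have L1: "sqrt (real m) \<le> real L" and L2: "real L - 1 < sqrt (real m)"
    by linarith+
  have "(halfline_op ^^ m) (\<lambda>_. 1) 1 \<le> 1 / real L + (real L - 1) / real m"
  proof (rule halfline_op_pow_one_le_strip)
    show "2 \<le> L"
      using L1 s1 by linarith
  qed (use assms in simp)
  also have "\<dots> \<le> 1 / sqrt (real m) + sqrt (real m) / real m"
    using L1 L2 s1 assms by (intro add_mono frac_le divide_right_mono) auto
  also have "sqrt (real m) / real m = 1 / sqrt (real m)"
    using s1 by (simp add: field_simps)
  finally show ?thesis
    by simp
qed

section \<open>Walks on the regular graph\<close>

definition walk_op :: "nat \<Rightarrow> (nat \<Rightarrow> nat \<Rightarrow> bool) \<Rightarrow> (nat \<Rightarrow> real) \<Rightarrow> nat \<Rightarrow> real" where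
  "walk_op n E f i = (\<Sum>j | j < n \<and> E i j. f j) / 3"

definition walk_prob :: "nat \<Rightarrow> (nat \<Rightarrow> nat \<Rightarrow> bool) \<Rightarrow> nat \<Rightarrow> nat \<Rightarrow> nat \<Rightarrow> real" where
  "walk_prob n E k i j = (walk_op n E ^^ k) (\<lambda>l. if l = j then 1 else 0) i"

text \<open>For \<open>y = 3/4\<close> this is the walk on \<open>G\<^sub>t\<close>
  restricted to \<open>H\<close> and killed when it leaves \<open>H\<close>; as a function of \<open>y\<close> it is the generating
  function of the number of visits to \<open>v\<close>.\<close>

definition weighted_walk_op ::
    "nat \<Rightarrow> (nat \<Rightarrow> nat \<Rightarrow> bool) \<Rightarrow> nat \<Rightarrow> real \<Rightarrow> (nat \<Rightarrow> real) \<Rightarrow> nat \<Rightarrow> real" where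
  "weighted_walk_op n E v y f i = (if i = v then y else 1) * walk_op n E f i"

lemma walk_op_eq_weighted: "walk_op n E = weighted_walk_op n E v 1"
  by (intro ext) (simp add: weighted_walk_op_def)

lemma walk_op_mono: "(\<And>j. j < n \<Longrightarrow> f j \<le> g j) \<Longrightarrow> walk_op n E f i \<le> walk_op n E g i"
  unfolding walk_op_def by (intro divide_right_mono sum_mono) auto

lemma walk_op_cong: "(\<And>j. j < n \<Longrightarrow> f j = g j) \<Longrightarrow> walk_op n E f i = walk_op n E g i"
  unfolding walk_op_def by (intro arg_cong[where f="\<lambda>x. x / 3"] sum.cong) auto

lemma walk_op_nonneg: "(\<And>j. j < n \<Longrightarrow> 0 \<le> f j) \<Longrightarrow> 0 \<le> walk_op n E f i"
  unfolding walk_op_def by (intro divide_nonneg_pos sum_nonneg) auto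

lemma walk_op_linear:
  "walk_op n E (\<lambda>j. a * f j + b * g j) i = a * walk_op n E f i + b * walk_op n E g i"
  unfolding walk_op_def by (simp add: sum.distrib sum_distrib_left field_simps)

lemma walk_op_sum:
  "finite A \<Longrightarrow> walk_op n E (\<lambda>j. \<Sum>N\<in>A. c N * f N j) i = (\<Sum>N\<in>A. c N * walk_op n E (f N) i)"
  unfolding walk_op_def by (simp add: sum.swap[of _ A] sum_divide_distrib sum_distrib_left)

lemma walk_op_const: "three_regular n E \<Longrightarrow> i < n \<Longrightarrow> walk_op n E (\<lambda>_. c) i = c"
  by (simp add: walk_op_def three_regular_def)

lemma walk_op_affine:
  assumes "three_regular n E" "i < n"
  shows "walk_op n E (\<lambda>j. a * f j + c) i = a * walk_op n E f i + c"
  using assms by (simp add: walk_op_def three_regular_def sum.distrib sum_distrib_left add_divide_distrib)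

lemma walk_op_pow_const:
  assumes "three_regular n E" "i < n"
  shows "(walk_op n E ^^ k) (\<lambda>_. c) i = c"
  using assms(2)
proof (induction k arbitrary: i)
  case (Suc k)
  have "(walk_op n E ^^ Suc k) (\<lambda>_. c) i = walk_op n E ((walk_op n E ^^ k) (\<lambda>_. c)) i"
    by simp
  also have "\<dots> = walk_op n E (\<lambda>_. c) i"
    by (rule walk_op_cong) (rule Suc.IH)
  finally show ?case
    using walk_op_const[OF assms(1) Suc.prems] by simp
qed simp

lemma walk_op_eq_sum_if: "walk_op n E f i = (\<Sum>j<n. if E i j then f j else 0) / 3"
proof -
  have "{j. j < n \<and> E i j} = {..<n} \<inter> {j. E i j}"
    by auto
  then show ?thesis
    unfolding walk_op_def by (simp only: sum.inter_restrict finite_lessThan mem_Collect_eq)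
qed

lemma sum_walk_op:
  assumes "three_regular n E"
  shows "(\<Sum>i<n. walk_op n E f i) = (\<Sum>j<n. f j)"
proof -
  have "(\<Sum>i<n. walk_op n E f i) = (\<Sum>j<n. \<Sum>i<n. if E i j then f j else 0) / 3"
    unfolding walk_op_eq_sum_if sum_divide_distrib[symmetric] by (subst sum.swap) (rule refl)
  also have "\<dots> = (\<Sum>j<n. 3 * walk_op n E (\<lambda>_. f j) j) / 3"
    using assms unfolding walk_op_eq_sum_if three_regular_def
    by (intro arg_cong[where f="\<lambda>x. x / 3"] sum.cong refl) (auto intro: sum.cong)
  also have "\<dots> = (\<Sum>j<n. f j)"
    using walk_op_const[OF assms] by (simp add: sum_distrib_left[symmetric])
  finally show ?thesis .
qed

lemma weighted_walk_op_pow_mono: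
  assumes "0 \<le> y" "\<And>j. j < n \<Longrightarrow> f j \<le> g j" "i < n"
  shows "(weighted_walk_op n E v y ^^ k) f i \<le> (weighted_walk_op n E v y ^^ k) g i"
  using assms(3)
proof (induction k arbitrary: i)
  case (Suc k)
  then show ?case
    using assms(1) by (auto simp: weighted_walk_op_def intro!: mult_left_mono walk_op_mono)
qed (simp add: assms(2))

lemma weighted_walk_op_pow_cong:
  assumes "0 \<le> y" "\<And>j. j < n \<Longrightarrow> f j = g j" "i < n"
  shows "(weighted_walk_op n E v y ^^ k) f i = (weighted_walk_op n E v y ^^ k) g i"
  using weighted_walk_op_pow_mono[of y n f g i] weighted_walk_op_pow_mono[of y n g f i] assms
  by (simp add: order_antisym)

lemma weighted_walk_op_pow_linear:
  "(weighted_walk_op n E v y ^^ k) (\<lambda>j. a * f j + b * g j) =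
     (\<lambda>i. a * (weighted_walk_op n E v y ^^ k) f i + b * (weighted_walk_op n E v y ^^ k) g i)"
  by (induction k) (auto simp: weighted_walk_op_def walk_op_linear algebra_simps)

lemma weighted_walk_op_pow_scale:
  "(weighted_walk_op n E v y ^^ k) (\<lambda>j. a * f j) i = a * (weighted_walk_op n E v y ^^ k) f i"
  using weighted_walk_op_pow_linear[where a=a and b=0 and g=f and f=f] by simp

lemma walk_prob_0: "walk_prob n E 0 i j = (if i = j then 1 else 0)"
  by (simp add: walk_prob_def)

lemma walk_prob_Suc: "walk_prob n E (Suc k) i j = walk_op n E (\<lambda>l. walk_prob n E k l j) i"
  by (simp add: walk_prob_def)

lemma walk_prob_nonneg: "0 \<le> walk_prob n E k i j"
  by (induction k arbitrary: i) (auto simp: walk_prob_0 walk_prob_Suc intro: walk_op_nonneg)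

section \<open>Number of visits to the attachment vertex\<close>

text \<open>\<open>visit_distr n E v s i N\<close> is the probability that the walk on \<open>H\<close> started at \<open>i\<close> is at \<open>v\<close>
  at time \<open>s\<close> after exactly \<open>N\<close> visits to \<open>v\<close> at times \<open>0, \<dots>, s - 1\<close>; \<open>mean_visits\<close> is
  the first moment of \<open>N\<close> on these paths, written as a renewal sum.\<close>

fun visit_distr :: "nat \<Rightarrow> (nat \<Rightarrow> nat \<Rightarrow> bool) \<Rightarrow> nat \<Rightarrow> nat \<Rightarrow> nat \<Rightarrow> nat \<Rightarrow> real" where
  "visit_distr n E v 0 i N = (if i = v \<and> N = 0 then 1 else 0)"
| "visit_distr n E v (Suc s) i N =
    (if i = v then (if N = 0 then 0 else walk_op n E (\<lambda>j. visit_distr n E v s j (N - 1)) i)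
     else walk_op n E (\<lambda>j. visit_distr n E v s j N) i)"

definition mean_visits :: "nat \<Rightarrow> (nat \<Rightarrow> nat \<Rightarrow> bool) \<Rightarrow> nat \<Rightarrow> nat \<Rightarrow> nat \<Rightarrow> real" where
  "mean_visits n E v s i = (\<Sum>k<s. walk_prob n E k i v * walk_prob n E (s - k) v v)"

lemma visit_distr_nonneg: "0 \<le> visit_distr n E v s i N"
  by (induction s arbitrary: i N) (auto intro: walk_op_nonneg)

lemma mean_visits_Suc:
  "mean_visits n E v (Suc s) i =
     walk_op n E (mean_visits n E v s) i + (if i = v then walk_prob n E (Suc s) v v else 0)"
proof -
  have "mean_visits n E v (Suc s) i = walk_prob n E 0 i v * walk_prob n E (Suc s) v v
      + (\<Sum>k<s. walk_prob n E (s - k) v v * walk_op n E (\<lambda>l. walk_prob n E k l v) i)"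
    unfolding mean_visits_def by (subst sum.lessThan_Suc_shift) (simp add: walk_prob_Suc mult.commute)
  also have "(\<Sum>k<s. walk_prob n E (s - k) v v * walk_op n E (\<lambda>l. walk_prob n E k l v) i)
      = walk_op n E (mean_visits n E v s) i"
    by (simp add: walk_op_sum[symmetric] mean_visits_def[abs_def] mult.commute)
  finally show ?thesis
    by (simp add: walk_prob_0)
qed

lemma visit_distr_generating_function:
  "s \<le> M \<Longrightarrow> (\<Sum>N\<le>M. visit_distr n E v s i N * y ^ N) =
     (weighted_walk_op n E v y ^^ s) (\<lambda>j. if j = v then 1 else 0) i"
proof (induction s arbitrary: i M)
  case 0
  have "(\<Sum>N\<le>M. visit_distr n E v 0 i N * y ^ N) = (\<Sum>N\<le>M. if N = 0 then (if i = v then 1 else 0) else 0)"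
    by (intro sum.cong) auto
  then show ?case
    by simp
next
  case (Suc s)
  let ?W = "(weighted_walk_op n E v y ^^ s) (\<lambda>j. if j = v then 1 else 0)"
  have IH: "(\<lambda>j. \<Sum>N\<le>M'. y ^ N * visit_distr n E v s j N) = ?W" if "s \<le> M'" for M'
    using Suc.IH[OF that] by (simp add: mult.commute)
  show ?case
  proof (cases "i = v")
    case True
    obtain M' where M: "M = Suc M'" "s \<le> M'"
      using Suc.prems by (cases M) auto
    have "(\<Sum>N\<le>M. visit_distr n E v (Suc s) i N * y ^ N)
        = y * walk_op n E (\<lambda>j. \<Sum>N\<le>M'. y ^ N * visit_distr n E v s j N) i"
      unfolding M(1) sum.atMost_Suc_shift
      using True by (simp add: walk_op_sum sum_distrib_left mult_ac)
    then show ?thesis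
      using True by (simp add: IH[OF M(2)] weighted_walk_op_def[of n E v y ?W])
  next
    case False
    have "(\<Sum>N\<le>M. visit_distr n E v (Suc s) i N * y ^ N)
        = walk_op n E (\<lambda>j. \<Sum>N\<le>M. y ^ N * visit_distr n E v s j N) i"
      using False by (simp add: walk_op_sum mult.commute)
    then show ?thesis
      using False Suc.prems by (simp add: IH weighted_walk_op_def[of n E v y ?W])
  qed
qed

lemma sum_visit_distr: "s \<le> M \<Longrightarrow> (\<Sum>N\<le>M. visit_distr n E v s i N) = walk_prob n E s i v"
  using visit_distr_generating_function[of s M n E v i 1]
  by (simp add: walk_prob_def walk_op_eq_weighted[symmetric])

lemma sum_visit_distr_mult_visits:
  "s \<le> M \<Longrightarrow> (\<Sum>N\<le>M. real N * visit_distr n E v s i N) = mean_visits n E v s i"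
proof (induction s arbitrary: i M)
  case 0
  then show ?case
    by (simp add: mean_visits_def)
next
  case (Suc s)
  have IH: "(\<lambda>j. \<Sum>N\<le>M'. real N * visit_distr n E v s j N) = mean_visits n E v s" if "s \<le> M'" for M'
    using Suc.IH[OF that] by auto
  show ?case
  proof (cases "i = v")
    case True
    obtain M' where M: "M = Suc M'" "s \<le> M'"
      using Suc.prems by (cases M) auto
    have "(\<Sum>N\<le>M. real N * visit_distr n E v (Suc s) i N)
        = (\<Sum>N\<le>M'. real N * walk_op n E (\<lambda>j. visit_distr n E v s j N) i)
          + (\<Sum>N\<le>M'. 1 * walk_op n E (\<lambda>j. visit_distr n E v s j N) i)"
      unfolding M(1) sum.atMost_Suc_shift
      using True by (simp add: distrib_right sum.distrib)
    also have "\<dots> = walk_op n E (mean_visits n E v s) i + walk_op n E (\<lambda>j. walk_prob n E s j v) i"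
    proof -
      have "(\<lambda>j. \<Sum>N\<le>M'. 1 * visit_distr n E v s j N) = (\<lambda>j. walk_prob n E s j v)"
        using sum_visit_distr[OF M(2)] by simp
      then show ?thesis
        by (simp only: walk_op_sum[symmetric] IH[OF M(2)] finite_atMost)
    qed
    finally show ?thesis
      using True by (simp add: mean_visits_Suc walk_prob_Suc)
  next
    case False
    have "(\<Sum>N\<le>M. real N * visit_distr n E v (Suc s) i N)
        = walk_op n E (\<lambda>j. \<Sum>N\<le>M. real N * visit_distr n E v s j N) i"
      using False by (simp add: walk_op_sum)
    then show ?thesis
      using False Suc.prems by (simp add: IH mean_visits_Suc)
  qed
qed

lemma power_ge_power_mult_linear:
  fixes y :: real
  assumes "0 \<le> y" "y \<le> 1" "0 < A"
  shows "y ^ A * (1 - real N / real A) \<le> y ^ N"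
proof (cases "N \<le> A")
  case True
  then have "y ^ A \<le> y ^ N"
    using assms by (intro power_decreasing) auto
  moreover have "y ^ A * (1 - real N / real A) \<le> y ^ A"
    using assms by (simp add: mult_left_le)
  ultimately show ?thesis
    by linarith
next
  case False
  then have "y ^ A * (1 - real N / real A) \<le> 0"
    using assms by (intro mult_nonneg_nonpos) auto
  then show ?thesis
    using assms by (meson order_trans zero_le_power)
qed

text \<open>Markov's inequality for the number of visits: few paths ending at \<open>v\<close> are discounted
  by more than \<open>y\<^sup>A\<close>.\<close>

lemma weighted_walk_op_pow_delta_ge:
  assumes "0 \<le> y" "y \<le> 1" "0 < A"
  shows "y ^ A * (walk_prob n E s i v - mean_visits n E v s i / real A)
    \<le> (weighted_walk_op n E v y ^^ s) (\<lambda>j. if j = v then 1 else 0) i"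
proof -
  have "(\<Sum>N\<le>s. visit_distr n E v s i N * (y ^ A * (1 - real N / real A)))
      = y ^ A * ((\<Sum>N\<le>s. visit_distr n E v s i N)
          - (\<Sum>N\<le>s. real N * visit_distr n E v s i N) / real A)"
    by (simp add: sum_distrib_left sum_distrib_right sum_subtractf sum_divide_distrib algebra_simps)
  then have "y ^ A * (walk_prob n E s i v - mean_visits n E v s i / real A)
      = (\<Sum>N\<le>s. visit_distr n E v s i N * (y ^ A * (1 - real N / real A)))"
    by (simp only: sum_visit_distr sum_visit_distr_mult_visits order_refl)
  also have "\<dots> \<le> (\<Sum>N\<le>s. visit_distr n E v s i N * y ^ N)"
    using assms by (intro sum_mono mult_left_mono power_ge_power_mult_linear visit_distr_nonneg) auto
  also have "\<dots> = (weighted_walk_op n E v y ^^ s) (\<lambda>j. if j = v then 1 else 0) i"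
    by (rule visit_distr_generating_function) simp
  finally show ?thesis .
qed

section \<open>Reduction to the two pieces of \<open>G\<^sub>t\<close>\<close>

locale Gt_graph =
  fixes n :: nat and E :: "nat \<Rightarrow> nat \<Rightarrow> bool" and v :: nat
  assumes regular: "three_regular n E" and v: "v < n"
begin

abbreviation "adj \<equiv> Gt_adj n E v"
abbreviation "T \<equiv> killed_op adj (Inl 0)"
abbreviation "Q \<equiv> weighted_walk_op n E v (3/4)"

lemma card_nbrs: "i < n \<Longrightarrow> card {j. j < n \<and> E i j} = 3"
  using regular unfolding three_regular_def by auto

lemma adj_Inl_iff:
  "adj (Inl a) y \<longleftrightarrow> y = Inl (Suc a) \<or> (0 < a \<and> y = Inl (a - 1)) \<or> (a = 0 \<and> y = Inr v)"
  by (cases y) (auto simp: Gt_adj_def)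

lemma adj_Inr_iff:
  "adj (Inr i) y \<longleftrightarrow> (i = v \<and> y = Inl 0) \<or> (\<exists>j. y = Inr j \<and> i < n \<and> j < n \<and> E i j)"
  by (cases y) (auto simp: Gt_adj_def)

lemma nbrs_Inl_0: "{y. adj (Inl 0) y} = {Inl 1, Inr v}"
  by (auto simp: adj_Inl_iff)

lemma nbrs_Inl_Suc: "{y. adj (Inl (Suc a)) y} = {Inl (Suc (Suc a)), Inl a}"
  by (auto simp: adj_Inl_iff)

lemma nbrs_Inr:
  "{y. adj (Inr i) y} = Inr ` {j. j < n \<and> E i j} \<union> (if i = v then {Inl 0} else {})"
  if "i < n"
  using that by (auto simp: adj_Inr_iff)

lemma card_nbrs_Inr:
  assumes "i < n"
  shows "card {y. adj (Inr i) y} = (if i = v then 4 else 3)"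
proof -
  have "card (Inr ` {j. j < n \<and> E i j} :: (nat + nat) set) = 3"
    using card_nbrs[OF assms] by (simp add: card_image)
  then show ?thesis
    by (auto simp: nbrs_Inr[OF assms] card_insert_if)
qed

lemma killed_op_Inl_0: "T g (Inl 0) = (g (Inl 1) + g (Inr v)) / 2"
  by (simp add: killed_op_eq_sum nbrs_Inl_0)

lemma killed_op_Inl_Suc: "T g (Inl (Suc a)) = halfline_op (\<lambda>b. g (Inl b)) (Suc a)"
  by (simp add: killed_op_eq_sum nbrs_Inl_Suc halfline_op_def)

lemma killed_op_Inr:
  assumes "i < n"
  shows "T g (Inr i) = Q (\<lambda>j. g (Inr j)) i"
proof -
  let ?N = "{j. j < n \<and> E i j}"
  let ?g = "\<lambda>y. if y = Inl 0 then 0 else g y"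
  have "sum ?g (insert (Inl 0) (Inr ` ?N)) = sum ?g (Inr ` ?N)"
    by (subst sum.insert) auto
  then have "(\<Sum>y | adj (Inr i) y. ?g y) = (\<Sum>j\<in>?N. g (Inr j))"
    unfolding nbrs_Inr[OF assms] by (auto simp: sum.reindex)
  moreover have "card {y. adj (Inr i) y} \<noteq> 0"
    using card_nbrs_Inr[OF assms] by simp
  then have "T g (Inr i) = (\<Sum>y | adj (Inr i) y. ?g y) / card {y. adj (Inr i) y}"
    by (intro killed_op_eq_sum) (simp_all add: card_eq_0_iff)
  ultimately show ?thesis
    using card_nbrs_Inr[OF assms] by (simp add: weighted_walk_op_def walk_op_def)
qed

lemma killed_op_pow_Inl:
  "1 \<le> a \<Longrightarrow> (T ^^ k) g (Inl a) = (halfline_op ^^ k) (\<lambda>b. g (Inl b)) a"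
proof (induction k arbitrary: g)
  case (Suc k)
  have "(T ^^ Suc k) g (Inl a) = (halfline_op ^^ k) (\<lambda>b. T g (Inl b)) a"
    by (simp add: funpow_Suc_right Suc.IH[OF Suc.prems] del: funpow.simps)
  also have "\<dots> = (halfline_op ^^ k) (halfline_op (\<lambda>b. g (Inl b))) a"
    using Suc.prems by (intro halfline_op_pow_cong) (auto simp: killed_op_Inl_Suc dest: Suc_le_D)
  finally show ?case
    by (simp add: funpow_Suc_right del: funpow.simps)
qed simp

lemma killed_op_pow_Inr:
  "i < n \<Longrightarrow> (T ^^ k) g (Inr i) = (Q ^^ k) (\<lambda>j. g (Inr j)) i"
proof (induction k arbitrary: g)
  case (Suc k)
  have "(T ^^ Suc k) g (Inr i) = (Q ^^ k) (\<lambda>j. T g (Inr j)) i"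
    by (simp add: funpow_Suc_right Suc del: funpow.simps)
  also have "\<dots> = (Q ^^ k) (Q (\<lambda>j. g (Inr j))) i"
    using Suc.prems by (intro weighted_walk_op_pow_cong) (auto simp: killed_op_Inr)
  finally show ?case
    by (simp add: funpow_Suc_right del: funpow.simps)
qed simp

lemma prob_step_Inr_Inl_0:
  assumes "j < n"
  shows "measure_pmf.prob (srw_step adj (Inr j)) {Inl 0} = (if j = v then 1/4 else 0)"
proof -
  have "{y. adj (Inr j) y} \<inter> {Inl 0} = (if j = v then {Inl 0} else {})"
    by (auto simp: adj_Inr_iff)
  moreover have "card {y. adj (Inr j) y} \<noteq> 0"
    using card_nbrs_Inr[OF assms] by simp
  then have "{y. adj (Inr j) y} \<noteq> {}" "finite {y. adj (Inr j) y}"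
    by (auto simp: card_eq_0_iff)
  ultimately show ?thesis
    using card_nbrs_Inr[OF assms] by (simp add: srw_step_def measure_pmf_of_set)
qed

theorem return_time_ge_Gt:
  "return_time_ge adj (Inl 0) (Suc (Suc m)) = ((halfline_op ^^ m) (\<lambda>_. 1) 1 + (Q ^^ m) (\<lambda>_. 1) v) / 2"
proof -
  have "return_time_ge adj (Inl 0) (Suc (Suc m)) = T ((T ^^ m) (\<lambda>_. 1)) (Inl 0)"
    by (simp add: return_time_ge_Suc)
  then show ?thesis
    by (simp add: killed_op_Inl_0 killed_op_pow_Inl killed_op_pow_Inr v)
qed

theorem return_time_eq_Gt_ge:
  "return_time_eq adj (Inl 0) (Suc (Suc m)) \<ge> (Q ^^ m) (\<lambda>j. if j = v then 1 else 0) v / 8"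
proof -
  let ?h = "\<lambda>x. measure_pmf.prob (srw_step adj x) {Inl 0}"
  have "(Q ^^ m) (\<lambda>j. ?h (Inr j)) v = (Q ^^ m) (\<lambda>j. 1/4 * (if j = v then 1 else 0)) v"
    using v by (intro weighted_walk_op_pow_cong) (auto simp: prob_step_Inr_Inl_0)
  also have "\<dots> = 1/4 * (Q ^^ m) (\<lambda>j. if j = v then 1 else 0) v"
    by (rule weighted_walk_op_pow_scale)
  finally have "(Q ^^ m) (\<lambda>j. ?h (Inr j)) v = 1/4 * (Q ^^ m) (\<lambda>j. if j = v then 1 else 0) v" .
  moreover have "return_time_eq adj (Inl 0) (Suc (Suc m)) = T ((T ^^ m) ?h) (Inl 0)"
    by (simp add: return_time_eq_Suc)
  ultimately have "return_time_eq adj (Inl 0) (Suc (Suc m)) =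
      ((halfline_op ^^ m) (\<lambda>b. ?h (Inl b)) 1 + (Q ^^ m) (\<lambda>j. if j = v then 1 else 0) v / 4) / 2"
    by (simp add: killed_op_Inl_0 killed_op_pow_Inl killed_op_pow_Inr v)
  then show ?thesis
    using halfline_op_pow_nonneg[of "\<lambda>b. ?h (Inl b)" m 1] by simp
qed

end

section \<open>Symmetric kernels with spectral radius at most one are \<open>\<ell>\<^sup>2\<close>-contractions\<close>

definition kernel_op :: "nat \<Rightarrow> (nat \<Rightarrow> nat \<Rightarrow> real) \<Rightarrow> (nat \<Rightarrow> real) \<Rightarrow> nat \<Rightarrow> real" where
  "kernel_op n c f i = (\<Sum>j<n. c i j * f j)"

definition kernel_mat :: "nat \<Rightarrow> (nat \<Rightarrow> nat \<Rightarrow> real) \<Rightarrow> complex mat" where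
  "kernel_mat n c = mat n n (\<lambda>(i, j). complex_of_real (c i j))"

definition sq_norm :: "nat \<Rightarrow> (nat \<Rightarrow> real) \<Rightarrow> real" where
  "sq_norm n f = (\<Sum>i<n. (f i)\<^sup>2)"

lemma sq_norm_nonneg: "0 \<le> sq_norm n f"
  unfolding sq_norm_def by (simp add: sum_nonneg)

lemma sq_norm_cong: "(\<And>i. i < n \<Longrightarrow> f i = g i) \<Longrightarrow> sq_norm n f = sq_norm n g"
  unfolding sq_norm_def by simp

lemma sq_norm_eq_0_kernel_op:
  assumes "sq_norm n f = 0"
  shows "sq_norm n (kernel_op n c f) = 0"
proof -
  have "f i = 0" if "i < n" for i
    using assms that sum_nonneg_eq_0_iff[of "{..<n}" "\<lambda>i. (f i)\<^sup>2"] by (simp add: sq_norm_def)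
  then show ?thesis
    by (simp add: sq_norm_def kernel_op_def)
qed

lemma kernel_op_pow_eq_mat_pow:
  assumes "i < n"
  shows "complex_of_real ((kernel_op n c ^^ k) f i) =
    (\<Sum>l<n. (kernel_mat n c ^\<^sub>m k) $$ (i, l) * complex_of_real (f l))"
  using assms
proof (induction k arbitrary: f)
  case 0
  have "(\<Sum>l<n. (if i = l then 1 else 0) * complex_of_real (f l)) = complex_of_real (f i)"
  proof -
    have "{..<n} \<inter> {l. i = l} = {i}"
      using 0 by auto
    then show ?thesis
      by (simp add: of_bool_def[symmetric])
  qed
  with 0 show ?case
    by (simp add: kernel_mat_def)
next
  case (Suc k)
  let ?M = "kernel_mat n c"
  have M: "?M \<in> carrier_mat n n" "?M ^\<^sub>m k \<in> carrier_mat n n"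
    by (simp_all add: kernel_mat_def)
  have "complex_of_real ((kernel_op n c ^^ Suc k) f i) =
      (\<Sum>l<n. (?M ^\<^sub>m k) $$ (i, l) * (\<Sum>j<n. ?M $$ (l, j) * complex_of_real (f j)))"
    by (simp add: funpow_Suc_right Suc kernel_op_def kernel_mat_def del: funpow.simps)
  also have "\<dots> = (\<Sum>j<n. (\<Sum>l<n. (?M ^\<^sub>m k) $$ (i, l) * ?M $$ (l, j)) * complex_of_real (f j))"
    unfolding sum_distrib_left sum_distrib_right mult.assoc by (rule sum.swap)
  also have "\<dots> = (\<Sum>j<n. (?M ^\<^sub>m Suc k) $$ (i, j) * complex_of_real (f j))"
    using M Suc.prems by (simp add: scalar_prod_def atLeast0LessThan)
  finally show ?case .
qed

lemma sq_norm_kernel_op_pow_le: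
  assumes "norm_bound (kernel_mat n c ^\<^sub>m k) B"
  shows "sq_norm n ((kernel_op n c ^^ k) f) \<le> real n * (B\<^sup>2 * (real n * sq_norm n f))"
proof -
  have l1_l2: "(\<Sum>l<n. \<bar>f l\<bar>)\<^sup>2 \<le> real n * sq_norm n f"
    using Cauchy_Schwarz_ineq_sum[of "\<lambda>_. 1" "\<lambda>l. \<bar>f l\<bar>" "{..<n}"] by (simp add: sq_norm_def)
  have "((kernel_op n c ^^ k) f i)\<^sup>2 \<le> B\<^sup>2 * (real n * sq_norm n f)" if "i < n" for i
  proof -
    have "\<bar>(kernel_op n c ^^ k) f i\<bar> = norm (complex_of_real ((kernel_op n c ^^ k) f i))"
      by simp
    also have "\<dots> \<le> (\<Sum>l<n. B * \<bar>f l\<bar>)"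
      unfolding kernel_op_pow_eq_mat_pow[OF that]
      using assms that
      by (intro order_trans[OF norm_sum] sum_mono)
        (auto simp: norm_mult norm_bound_def kernel_mat_def intro!: mult_right_mono)
    finally have "\<bar>(kernel_op n c ^^ k) f i\<bar> \<le> B * (\<Sum>l<n. \<bar>f l\<bar>)"
      by (simp add: sum_distrib_left)
    then have "((kernel_op n c ^^ k) f i)\<^sup>2 \<le> B\<^sup>2 * (\<Sum>l<n. \<bar>f l\<bar>)\<^sup>2"
      by (metis abs_ge_zero power2_abs power_mono power_mult_distrib)
    also have "\<dots> \<le> B\<^sup>2 * (real n * sq_norm n f)"
      by (intro mult_left_mono l1_l2) simp
    finally show ?thesis .
  qed
  then show ?thesis
    using sum_mono[of "{..<n}" "\<lambda>i. ((kernel_op n c ^^ k) f i)\<^sup>2" "\<lambda>_. B\<^sup>2 * (real n * sq_norm n f)"]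
    by (simp add: sq_norm_def)
qed

lemma poly_sq_over_exp_tendsto_0:
  fixes q :: real
  assumes "q > 1"
  shows "((\<lambda>k::nat. N * (c1 + c2 * real k ^ d)\<^sup>2 / q ^ k) \<longlongrightarrow> 0) sequentially"
proof -
  have "sqrt q > 1"
    using assms by simp
  then have "((\<lambda>k::nat. (c1 + c2 * real k ^ d) / sqrt q ^ k) \<longlongrightarrow> 0) sequentially"
    by real_asymp
  then have "((\<lambda>k::nat. N * ((c1 + c2 * real k ^ d) / sqrt q ^ k)\<^sup>2) \<longlongrightarrow> N * 0\<^sup>2) sequentially"
    by (intro tendsto_intros)
  moreover have "(sqrt q ^ k)\<^sup>2 = q ^ k" for k
    using assms by (simp add: power_mult_distrib[symmetric] power2_eq_square)
  ultimately show ?thesis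
    by (simp add: power_divide)
qed

context
  fixes n :: nat and c :: "nat \<Rightarrow> nat \<Rightarrow> real"
  assumes symmetric: "\<And>i j. i < n \<Longrightarrow> j < n \<Longrightarrow> c i j = c j i"
begin

text \<open>By symmetry \<open>\<parallel>K g\<parallel>\<^sup>2 = \<langle>g, K\<^sup>2 g\<rangle>\<close>; then Cauchy-Schwarz.\<close>

lemma sq_norm_kernel_op_sq_le:
  "(sq_norm n (kernel_op n c g))\<^sup>2 \<le> sq_norm n (kernel_op n c (kernel_op n c g)) * sq_norm n g"
proof -
  let ?Kg = "kernel_op n c g"
  have "(\<Sum>i<n. g i * kernel_op n c ?Kg i) = (\<Sum>i<n. \<Sum>j<n. g i * c i j * ?Kg j)"
    by (simp add: kernel_op_def[of n c ?Kg] sum_distrib_left mult.assoc)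
  also have "\<dots> = (\<Sum>j<n. \<Sum>i<n. g i * c i j * ?Kg j)"
    by (rule sum.swap)
  also have "\<dots> = (\<Sum>j<n. ?Kg j * ?Kg j)"
    by (intro sum.cong refl) (simp add: kernel_op_def[of n c g] sum_distrib_right symmetric mult_ac)
  finally have "sq_norm n ?Kg = (\<Sum>i<n. g i * kernel_op n c ?Kg i)"
    by (simp add: sq_norm_def power2_eq_square)
  then show ?thesis
    using Cauchy_Schwarz_ineq_sum[of g "kernel_op n c (kernel_op n c g)" "{..<n}"]
    by (simp add: sq_norm_def mult.commute)
qed

lemma sq_norm_kernel_op_pow_log_convex:
  "sq_norm n (kernel_op n c f) * sq_norm n ((kernel_op n c ^^ k) f)
     \<le> sq_norm n ((kernel_op n c ^^ Suc k) f) * sq_norm n f"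
proof (induction k)
  case (Suc k)
  define b where "b j = sq_norm n ((kernel_op n c ^^ j) f)" for j
  have b_nonneg: "0 \<le> b j" for j
    by (simp add: b_def sq_norm_nonneg)
  have IH: "b 1 * b k \<le> b (Suc k) * b 0"
    using Suc.IH by (simp add: b_def)
  have sq: "(b (Suc k))\<^sup>2 \<le> b (Suc (Suc k)) * b k"
    using sq_norm_kernel_op_sq_le[of "(kernel_op n c ^^ k) f"] by (simp add: b_def)
  have "b 1 * b (Suc k) \<le> b (Suc (Suc k)) * b 0"
  proof (cases "b k = 0")
    case True
    then have "b (Suc k) = 0"
      by (simp add: b_def sq_norm_eq_0_kernel_op)
    then show ?thesis
      using b_nonneg by simp
  next
    case False
    then have "0 < b k"
      using b_nonneg[of k] by simp
    moreover have "(b 1 * b (Suc k)) * b k \<le> (b (Suc (Suc k)) * b 0) * b k"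
    proof -
      have "(b 1 * b (Suc k)) * b k \<le> (b (Suc k) * b 0) * b (Suc k)"
        using mult_right_mono[OF IH b_nonneg[of "Suc k"]] by (simp add: mult_ac)
      also have "\<dots> \<le> (b (Suc (Suc k)) * b k) * b 0"
        using mult_right_mono[OF sq b_nonneg[of 0]] by (simp add: power2_eq_square mult_ac)
      finally show ?thesis
        by (simp add: mult_ac)
    qed
    ultimately show ?thesis
      by simp
  qed
  then show ?case
    by (simp add: b_def)
qed (simp add: mult.commute)

lemma sq_norm_kernel_op_pow_ge:
  assumes "sq_norm n f > 0"
  shows "sq_norm n f * (sq_norm n (kernel_op n c f) / sq_norm n f) ^ k \<le> sq_norm n ((kernel_op n c ^^ k) f)"
proof (induction k)
  case (Suc k)
  let ?q = "sq_norm n (kernel_op n c f) / sq_norm n f"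
  have "sq_norm n f * ?q ^ Suc k \<le> sq_norm n ((kernel_op n c ^^ k) f) * ?q"
    using mult_right_mono[OF Suc.IH, of ?q] assms by (simp add: sq_norm_nonneg mult_ac)
  also have "\<dots> \<le> sq_norm n ((kernel_op n c ^^ Suc k) f)"
    using sq_norm_kernel_op_pow_log_convex[of f k] assms by (simp add: field_simps)
  finally show ?case .
qed simp

text \<open>If \<open>\<parallel>K f\<parallel> > \<parallel>f\<parallel>\<close>, log-convexity forces \<open>\<parallel>K\<^sup>k f\<parallel>\<close> to grow exponentially, whereas
  spectral radius at most one only allows polynomial growth of \<open>K\<^sup>k\<close>.\<close>

theorem sq_norm_kernel_op_le:
  assumes "spectral_radius (kernel_mat n c) \<le> 1"
  shows "sq_norm n (kernel_op n c f) \<le> sq_norm n f"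
proof (rule ccontr)
  assume "\<not> ?thesis"
  then have grow: "sq_norm n (kernel_op n c f) > sq_norm n f"
    by simp
  then have f_pos: "sq_norm n f > 0"
    using sq_norm_nonneg[of n f] sq_norm_eq_0_kernel_op[of n f c] by fastforce
  define q where "q = sq_norm n (kernel_op n c f) / sq_norm n f"
  have q: "q > 1"
    unfolding q_def using grow f_pos by simp
  have "kernel_mat n c \<in> carrier_mat n n"
    by (simp add: kernel_mat_def)
  then obtain c1 c2 where bound: "\<And>k. norm_bound (kernel_mat n c ^\<^sub>m k) (c1 + c2 * real k ^ (n - 1))"
    using spectral_radius_jnf_norm_bound_le_1_upper_triangular[OF _ assms] by blast
  have "eventually (\<lambda>k. (real n * real n) * (c1 + c2 * real k ^ (n - 1))\<^sup>2 / q ^ k < 1) sequentially"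
    using poly_sq_over_exp_tendsto_0[OF q] by (rule order_tendstoD) simp
  then obtain k where k: "(real n * real n) * (c1 + c2 * real k ^ (n - 1))\<^sup>2 < q ^ k"
    using q by (auto simp: eventually_sequentially field_simps)
  have "sq_norm n f * q ^ k \<le> sq_norm n ((kernel_op n c ^^ k) f)"
    unfolding q_def by (rule sq_norm_kernel_op_pow_ge[OF f_pos])
  also have "\<dots> \<le> sq_norm n f * ((real n * real n) * (c1 + c2 * real k ^ (n - 1))\<^sup>2)"
    using sq_norm_kernel_op_pow_le[OF bound] by (simp add: mult_ac)
  finally show False
    using k f_pos by simp
qed

end

section \<open>Spectral gap of the regular graph\<close>

lemma index_mult_mat_vec_sum:
  "A \<in> carrier_mat n n \<Longrightarrow> x \<in> carrier_vec n \<Longrightarrow> i < n \<Longrightarrow>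
     vec_index (A *\<^sub>v x) i = (\<Sum>j<n. A $$ (i, j) * vec_index x j)"
  by (simp add: scalar_prod_def atLeast0LessThan)

lemma lin_indpt_one_vec_zero_sum:
  fixes x :: "complex vec"
  assumes x: "x \<in> carrier_vec n" "x \<noteq> 0\<^sub>v n" "(\<Sum>i<n. vec_index x i) = 0"
  shows "\<not> module.lin_dep class_ring (module_vec TYPE(complex) n) {vec n (\<lambda>_. 1), x}"
proof
  interpret V: vec_space "TYPE(complex)" n .
  let ?one = "vec n (\<lambda>_. 1 :: complex)"
  assume "V.lin_dep {?one, x}"
  then obtain A a w where A: "A \<subseteq> {?one, x}" "V.lincomb a A = 0\<^sub>v n" "w \<in> A" "a w \<noteq> 0"
    unfolding V.lin_dep_def by auto
  obtain i where i: "i < n" "vec_index x i \<noteq> 0"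
    using x(1,2) by (auto simp: vec_eq_iff)
  then have "n > 0"
    by simp
  have ne: "?one \<noteq> x"
    using x(3) \<open>n > 0\<close> by auto
  define \<alpha> where "\<alpha> = (if ?one \<in> A then a ?one else 0)"
  define \<beta> where "\<beta> = (if x \<in> A then a x else 0)"
  have comb: "\<alpha> + \<beta> * vec_index x j = 0" if "j < n" for j
  proof -
    have "0 = vec_index (V.lincomb a A) j"
      using A(2) that by simp
    also have "\<dots> = (\<Sum>y\<in>A. a y * vec_index y j)"
      using A(1) x(1) that by (intro V.lincomb_index) auto
    also have "\<dots> = \<alpha> + \<beta> * vec_index x j"
    proof -
      consider "A = {}" | "A = {?one}" | "A = {x}" | "A = {?one, x}"
        using A(1) by blast
      then show ?thesis
        using ne that unfolding \<alpha>_def \<beta>_def by cases auto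
    qed
    finally show ?thesis
      by simp
  qed
  have "(\<Sum>j<n. \<alpha> + \<beta> * vec_index x j) = of_nat n * \<alpha> + \<beta> * (\<Sum>j<n. vec_index x j)"
    by (simp add: sum.distrib sum_distrib_left)
  then have "\<alpha> = 0"
    using comb x(3) \<open>n > 0\<close> by simp
  moreover have "\<beta> = 0"
    using comb[OF i(1)] \<open>\<alpha> = 0\<close> i(2) by simp
  ultimately show False
    using A(1,3,4) unfolding \<alpha>_def \<beta>_def by auto
qed

lemma dim_gen_eigenspace_le_order:
  fixes A :: "complex mat"
  assumes A: "A \<in> carrier_mat n n"
  shows "dim_gen_eigenspace A a 1 \<le> Polynomial.order a (char_poly A)"
proof -
  obtain as where "char_poly A = (\<Prod>a\<leftarrow>as. [:- a, 1:])"
    using char_poly_factorized[OF A] by auto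
  then obtain n_as where jnf: "jordan_nf A n_as"
    using jordan_nf_exists[OF A] by auto
  have min_le: "sum_list (map (min 1 \<circ> f) xs) \<le> sum_list (map f xs)" for f :: "_ \<Rightarrow> nat" and xs
    by (induction xs) auto
  show ?thesis
    unfolding dim_gen_eigenspace[OF jnf] jordan_nf_order[OF jnf]
    using min_le[of fst] by (simp add: case_prod_beta')
qed

text \<open>Fixed vectors lie in the generalised eigenspace of \<open>1\<close>, which is at most one-dimensional
  when \<open>1\<close> is a simple root of the characteristic polynomial.\<close>

lemma fixed_vec_zero_sum_eq_0:
  fixes A :: "complex mat"
  assumes A: "A \<in> carrier_mat n n" and simple: "Polynomial.order 1 (char_poly A) \<le> 1"
    and fixes_one: "A *\<^sub>v vec n (\<lambda>_. 1) = vec n (\<lambda>_. 1)"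
    and x: "x \<in> carrier_vec n" "A *\<^sub>v x = x" "(\<Sum>i<n. vec_index x i) = 0"
  shows "x = 0\<^sub>v n"
proof (rule ccontr)
  assume x0: "x \<noteq> 0\<^sub>v n"
  let ?one = "vec n (\<lambda>_. 1 :: complex)"
  have "n > 0"
    using x(1) x0 by (auto simp: vec_eq_iff)
  have dim: "dim_gen_eigenspace A 1 1 \<le> 1"
    using dim_gen_eigenspace_le_order[OF A, of 1] simple by simp
  define M where "M = char_matrix A 1"
  have M: "M \<in> carrier_mat n n"
    unfolding M_def using A by simp
  interpret K: kernel n n M
    by unfold_locales (rule M)
  have kernel_dim: "K.dim = dim_gen_eigenspace A 1 1"
    unfolding dim_gen_eigenspace_def M_def[symmetric] kernel_dim_def using M by simp
  have in_kernel: "y \<in> mat_kernel M" if "y \<in> carrier_vec n" "A *\<^sub>v y = y" for y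
  proof -
    have "M = A - 1\<^sub>m n"
      unfolding M_def char_matrix_def using A by (intro eq_matI) auto
    then have "M *\<^sub>v y = A *\<^sub>v y - 1\<^sub>m n *\<^sub>v y"
      using A that by (simp add: minus_mult_distrib_mat_vec)
    also have "\<dots> = 0\<^sub>v n"
      using that by auto
    finally show ?thesis
      unfolding mat_kernel[OF M] using that by simp
  qed
  have S: "{?one, x} \<subseteq> mat_kernel M"
    using in_kernel fixes_one x by auto
  have "submodule class_ring (mat_kernel M) (module_vec TYPE(complex) n)"
    unfolding submodule_def
    using K.NC.module_axioms mult_add_distrib_mat_vec[OF M] mult_mat_vec[OF M] mat_kernel[OF M]
    by (auto simp: class_ring_simps)
  then have li: "\<not> K.lin_dep {?one, x}"
    using K.NC.span_li_not_depend(2)[OF S] lin_indpt_one_vec_zero_sum[OF x(1) x0 x(3)] by simp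
  obtain B where "finite B" "K.basis B"
    using kernel_basis_exists[OF M] by auto
  then have "K.Ker.fin_dim"
    unfolding K.Ker.fin_dim_def K.Ker.basis_def by auto
  have "?one \<noteq> x"
    using x(3) \<open>n > 0\<close> by auto
  then have "2 \<le> K.dim"
    using K.Ker.li_le_dim(2)[OF \<open>K.Ker.fin_dim\<close> S li] by simp
  with kernel_dim dim show False
    by simp
qed

locale spectral_gap =
  fixes n :: nat and E :: "nat \<Rightarrow> nat \<Rightarrow> bool" and \<rho> r :: real
  assumes regular: "three_regular n E" and n2: "2 \<le> n"
    and rho_le: "\<rho> \<le> r" and r_pos: "0 < r" and r_less_1: "r < 1"
    and eigs: "nontrivial_eigs_bounded (trans_mat3 n E) \<rho>"
begin

definition trans_prob :: "nat \<Rightarrow> nat \<Rightarrow> real" where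
  "trans_prob i j = (if E i j then 1/3 else 0)"

definition centered :: "nat \<Rightarrow> nat \<Rightarrow> real" where
  "centered i j = (trans_prob i j - 1 / real n) / r"

abbreviation "A \<equiv> trans_mat3 n E"
abbreviation "C \<equiv> kernel_mat n centered"

lemma trans_prob_eq_centered: "trans_prob i j = r * centered i j + 1 / real n"
  using r_pos by (simp add: centered_def)

lemma trans_prob_sym: "i < n \<Longrightarrow> j < n \<Longrightarrow> trans_prob i j = trans_prob j i"
  using regular unfolding three_regular_def trans_prob_def by auto

lemma walk_op_eq_sum_trans_prob: "walk_op n E f i = (\<Sum>j<n. trans_prob i j * f j)"
  unfolding walk_op_eq_sum_if sum_divide_distrib by (intro sum.cong) (auto simp: trans_prob_def)

lemma sum_trans_prob_row: "i < n \<Longrightarrow> (\<Sum>j<n. trans_prob i j) = 1"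
  using walk_op_const[OF regular, of i 1] by (simp add: walk_op_eq_sum_trans_prob)

lemma sum_trans_prob_col: "j < n \<Longrightarrow> (\<Sum>i<n. trans_prob i j) = 1"
  using sum_trans_prob_row[of j] by (simp add: trans_prob_sym)

lemma walk_op_zero_sum:
  assumes "(\<Sum>j<n. w j) = 0"
  shows "walk_op n E w i = r * kernel_op n centered w i"
proof -
  have "walk_op n E w i = (\<Sum>j<n. r * (centered i j * w j)) + (\<Sum>j<n. w j) / real n"
    by (simp add: walk_op_eq_sum_trans_prob trans_prob_eq_centered distrib_right sum.distrib
        sum_divide_distrib mult.assoc)
  then show ?thesis
    using assms by (simp add: kernel_op_def sum_distrib_left)
qed

lemma centered_sym: "i < n \<Longrightarrow> j < n \<Longrightarrow> centered i j = centered j i"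
  by (simp add: centered_def trans_prob_sym)

lemma sum_centered_col: "j < n \<Longrightarrow> (\<Sum>i<n. centered i j) = 0"
  using n2 by (simp add: centered_def sum_divide_distrib[symmetric] sum_subtractf sum_trans_prob_col)

lemma A_carrier: "A \<in> carrier_mat n n"
  by (simp add: trans_mat3_def)

lemma C_carrier: "C \<in> carrier_mat n n"
  by (simp add: kernel_mat_def)

lemma index_A_mult_vec:
  "x \<in> carrier_vec n \<Longrightarrow> i < n \<Longrightarrow>
     vec_index (A *\<^sub>v x) i = (\<Sum>j<n. complex_of_real (trans_prob i j) * vec_index x j)"
  using index_mult_mat_vec_sum[OF A_carrier]
  by (auto simp: trans_mat3_def trans_prob_def intro!: sum.cong)

lemma index_C_mult_vec:
  "x \<in> carrier_vec n \<Longrightarrow> i < n \<Longrightarrow>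
     vec_index (C *\<^sub>v x) i = (\<Sum>j<n. complex_of_real (centered i j) * vec_index x j)"
  using index_mult_mat_vec_sum[OF C_carrier] by (simp add: kernel_mat_def)

lemma A_fixes_one: "A *\<^sub>v vec n (\<lambda>_. 1) = vec n (\<lambda>_. 1)"
proof (rule eq_vecI)
  fix i assume "i < dim_vec (vec n (\<lambda>_. 1 :: complex))"
  then have "i < n"
    by simp
  then show "vec_index (A *\<^sub>v vec n (\<lambda>_. 1)) i = vec_index (vec n (\<lambda>_. 1)) i"
    using sum_trans_prob_row[of i]
    by (simp add: index_A_mult_vec flip: of_real_sum)
qed (use A_carrier in auto)

lemma sum_C_mult_vec:
  assumes "x \<in> carrier_vec n"
  shows "(\<Sum>i<n. vec_index (C *\<^sub>v x) i) = 0"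
proof -
  have "(\<Sum>i<n. vec_index (C *\<^sub>v x) i) = (\<Sum>i<n. \<Sum>j<n. complex_of_real (centered i j) * vec_index x j)"
    using assms by (simp add: index_C_mult_vec)
  also have "\<dots> = (\<Sum>j<n. \<Sum>i<n. complex_of_real (centered i j) * vec_index x j)"
    by (rule sum.swap)
  also have "\<dots> = 0"
    by (simp add: sum_distrib_right[symmetric] sum_centered_col flip: of_real_sum)
  finally show ?thesis .
qed

lemma A_mult_zero_sum:
  assumes "x \<in> carrier_vec n" "(\<Sum>j<n. vec_index x j) = 0"
  shows "A *\<^sub>v x = complex_of_real r \<cdot>\<^sub>v (C *\<^sub>v x)"
proof (rule eq_vecI)
  fix i assume "i < dim_vec (complex_of_real r \<cdot>\<^sub>v (C *\<^sub>v x))"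
  then have i: "i < n"
    using C_carrier by simp
  have "vec_index (A *\<^sub>v x) i = complex_of_real r * vec_index (C *\<^sub>v x) i
      + complex_of_real (1 / real n) * (\<Sum>j<n. vec_index x j)"
    using assms(1) i
    by (simp add: index_A_mult_vec index_C_mult_vec trans_prob_eq_centered distrib_right sum.distrib
        sum_distrib_left mult.assoc)
  then show "vec_index (A *\<^sub>v x) i = vec_index (complex_of_real r \<cdot>\<^sub>v (C *\<^sub>v x)) i"
    using assms i C_carrier by simp
qed (use assms A_carrier C_carrier in auto)

text \<open>On zero-sum vectors \<open>A = r C\<close>; the eigenvalue \<open>1\<close> of \<open>A\<close> is excluded there by its
  simplicity, and all other eigenvalues of \<open>A\<close> are at most \<open>\<rho> \<le> r\<close> in modulus.\<close>

lemma eigenvalue_C_le_1: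
  assumes "eigenvalue C \<mu>"
  shows "cmod \<mu> \<le> 1"
proof -
  obtain x where x: "x \<in> carrier_vec n" "x \<noteq> 0\<^sub>v n" "C *\<^sub>v x = \<mu> \<cdot>\<^sub>v x"
    using assms C_carrier unfolding eigenvalue_def eigenvector_def by auto
  have "\<mu> * (\<Sum>i<n. vec_index x i) = (\<Sum>i<n. vec_index (C *\<^sub>v x) i)"
    using x(1) by (simp add: x(3) sum_distrib_left)
  then have "\<mu> = 0 \<or> (\<Sum>i<n. vec_index x i) = 0"
    using sum_C_mult_vec[OF x(1)] by simp
  then show ?thesis
  proof
    assume zero_sum: "(\<Sum>i<n. vec_index x i) = 0"
    have Ax: "A *\<^sub>v x = (complex_of_real r * \<mu>) \<cdot>\<^sub>v x"
      using A_mult_zero_sum[OF x(1) zero_sum] x(3) by (simp add: smult_smult_assoc)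
    have "complex_of_real r * \<mu> \<noteq> 1"
    proof
      assume "complex_of_real r * \<mu> = 1"
      then have "A *\<^sub>v x = x"
        using Ax x(1) by simp
      then show False
        using fixed_vec_zero_sum_eq_0[OF A_carrier _ A_fixes_one x(1) _ zero_sum] x(2) eigs
        by (auto simp: nontrivial_eigs_bounded_def)
    qed
    moreover have "eigenvalue A (complex_of_real r * \<mu>)"
      unfolding eigenvalue_def eigenvector_def using x(1,2) Ax A_carrier by auto
    ultimately have "r * cmod \<mu> \<le> \<rho>"
      using eigs r_pos by (auto simp: nontrivial_eigs_bounded_def norm_mult)
    then have "r * cmod \<mu> \<le> r * 1"
      using rho_le by simp
    then show ?thesis
      using r_pos by (simp only: mult_le_cancel_left_pos)
  qed simp
qed

lemma spectral_radius_C_le_1: "spectral_radius C \<le> 1"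
proof -
  have "spectral_radius C \<in> norm ` spectrum C"
    using n2 by (intro spectral_radius_mem_max(1)[OF C_carrier]) simp
  then show ?thesis
    using eigenvalue_C_le_1 by (auto simp: spectrum_def)
qed

lemma walk_op_pow_zero_sum:
  assumes "(\<Sum>j<n. w j) = 0"
  shows "sq_norm n ((walk_op n E ^^ k) w) \<le> (r\<^sup>2) ^ k * sq_norm n w
    \<and> (\<Sum>i<n. (walk_op n E ^^ k) w i) = 0"
proof (induction k)
  case (Suc k)
  let ?w = "(walk_op n E ^^ k) w"
  have "sq_norm n (walk_op n E ?w) = sq_norm n (\<lambda>i. r * kernel_op n centered ?w i)"
    using Suc.IH by (intro sq_norm_cong walk_op_zero_sum) simp
  also have "\<dots> = r\<^sup>2 * sq_norm n (kernel_op n centered ?w)"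
    by (simp add: sq_norm_def power_mult_distrib sum_distrib_left)
  also have "\<dots> \<le> r\<^sup>2 * sq_norm n ?w"
    using sq_norm_kernel_op_le[OF centered_sym spectral_radius_C_le_1] by (simp add: mult_left_mono)
  also have "\<dots> \<le> r\<^sup>2 * ((r\<^sup>2) ^ k * sq_norm n w)"
    using Suc.IH by (simp add: mult_left_mono)
  finally show ?case
    using Suc.IH by (simp add: sum_walk_op[OF regular])
qed (simp add: assms)

theorem walk_prob_close_uniform:
  assumes "i < n" "j < n"
  shows "\<bar>walk_prob n E k i j - 1 / real n\<bar> \<le> r ^ k"
proof -
  define w where "w l = (if l = j then 1 else 0) - 1 / real n" for l
  have w_sum: "(\<Sum>l<n. w l) = 0"
    using assms(2) n2 by (simp add: w_def sum_subtractf)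
  have "walk_prob n E k i j = (walk_op n E ^^ k) (\<lambda>l. 1 * w l + 1 * (1 / real n)) i"
    by (simp add: walk_prob_def w_def)
  also have "\<dots> = (walk_op n E ^^ k) w i + 1 / real n"
    using weighted_walk_op_pow_linear[where v=0 and y=1 and a=1 and b=1 and f=w and g="\<lambda>_. 1 / real n"]
      walk_op_pow_const[OF regular assms(1)]
    by (simp add: walk_op_eq_weighted[symmetric])
  finally have diff: "walk_prob n E k i j - 1 / real n = (walk_op n E ^^ k) w i"
    by simp
  have "(w l)\<^sup>2 = w l * (if l = j then 1 else 0) - w l / real n" for l
    by (auto simp: w_def field_simps power2_eq_square)
  then have "sq_norm n w = w j - (\<Sum>l<n. w l) / real n"
    using assms(2)
    by (simp add: sq_norm_def sum_subtractf sum_divide_distrib[symmetric] if_distrib[of "(*) _"]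
        cong: if_cong)
  then have "sq_norm n w \<le> 1"
    using w_sum by (simp add: w_def)
  have "((walk_op n E ^^ k) w i)\<^sup>2 \<le> sq_norm n ((walk_op n E ^^ k) w)"
    unfolding sq_norm_def using assms(1) by (intro member_le_sum) auto
  also have "\<dots> \<le> (r\<^sup>2) ^ k * sq_norm n w"
    using walk_op_pow_zero_sum[OF w_sum] by simp
  also have "\<dots> \<le> (r\<^sup>2) ^ k"
    using \<open>sq_norm n w \<le> 1\<close> by (simp add: mult_left_le)
  also have "\<dots> = (r ^ k)\<^sup>2"
    by (metis power_mult mult.commute)
  finally show ?thesis
    using diff r_pos by (simp add: power2_le_iff_abs_le)
qed

end

section \<open>Survival and returns of the walk on \<open>H\<close> killed at the attachment vertex\<close>

locale mixing_graph =
  fixes n :: nat and E :: "nat \<Rightarrow> nat \<Rightarrow> bool" and v :: nat and r :: real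
  assumes regular: "three_regular n E" and v: "v < n" and n2: "2 \<le> n"
    and r_pos: "0 < r" and r_less_1: "r < 1"
    and mixing: "\<And>k i j. i < n \<Longrightarrow> j < n \<Longrightarrow> \<bar>walk_prob n E k i j - 1 / real n\<bar> \<le> r ^ k"
begin

abbreviation "R \<equiv> walk_op n E"
abbreviation "P \<equiv> walk_prob n E"
abbreviation "Q \<equiv> weighted_walk_op n E v (3/4)"
abbreviation "G \<equiv> 1 / (1 - r)"

lemma G_pos: "0 < G"
  using r_less_1 by simp

lemma sum_walk_prob_col: "(\<Sum>i<n. P k i v) = 1"
proof (induction k)
  case 0
  show ?case
    using v by (simp add: walk_prob_0)
next
  case (Suc k)
  have "(\<Sum>i<n. P (Suc k) i v) = (\<Sum>i<n. R (\<lambda>l. P k l v) i)"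
    by (simp only: walk_prob_Suc)
  also have "\<dots> = (\<Sum>l<n. P k l v)"
    by (rule sum_walk_op[OF regular])
  finally show ?case
    using Suc.IH by simp
qed


lemma sum_powers_r_le: "(\<Sum>k<s. r ^ k) \<le> G"
proof -
  have "(\<Sum>k<s. r ^ k) = (1 - r ^ s) / (1 - r)"
    using r_less_1 by (simp add: sum_gp_strict)
  also have "\<dots> \<le> G"
    using r_pos r_less_1 by (intro divide_right_mono) auto
  finally show ?thesis .
qed

definition green :: "nat \<Rightarrow> real" where
  "green i = (\<Sum>k. P k i v - 1 / real n)"

lemma summable_green:
  assumes "i < n"
  shows "summable (\<lambda>k. P k i v - 1 / real n)"
proof (rule summable_comparison_test)
  show "\<exists>N. \<forall>k\<ge>N. norm (P k i v - 1 / real n) \<le> r ^ k"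
    using mixing[OF assms v] by auto
  show "summable (\<lambda>k. r ^ k)"
    using r_pos r_less_1 by (intro summable_geometric) simp
qed

lemma abs_green_le:
  assumes "i < n"
  shows "\<bar>green i\<bar> \<le> G"
proof -
  have geom: "summable (\<lambda>k. r ^ k)"
    using r_pos r_less_1 by (intro summable_geometric) simp
  have bound: "norm \<bar>P k i v - 1 / real n\<bar> \<le> r ^ k" for k
    using mixing[OF assms v] by simp
  then have abs_summable: "summable (\<lambda>k. \<bar>P k i v - 1 / real n\<bar>)"
    by (intro summable_comparison_test[OF _ geom]) blast
  have "\<bar>green i\<bar> \<le> (\<Sum>k. \<bar>P k i v - 1 / real n\<bar>)"
    unfolding green_def by (rule summable_rabs[OF abs_summable])
  also have "\<dots> \<le> (\<Sum>k. r ^ k)"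
    using bound by (intro suminf_le[OF _ abs_summable geom]) simp
  also have "\<dots> = G"
    using r_pos r_less_1 by (simp add: suminf_geometric)
  finally show ?thesis .
qed

lemma walk_op_green:
  assumes i: "i < n"
  shows "R green i = green i - ((if i = v then 1 else 0) - 1 / real n)"
proof -
  let ?N = "{j. j < n \<and> E i j}"
  have "R green i = (\<Sum>k. \<Sum>j\<in>?N. P k j v - 1 / real n) / 3"
    unfolding walk_op_def green_def by (subst suminf_sum) (auto intro: summable_green)
  also have "\<dots> = (\<Sum>k. (\<Sum>j\<in>?N. P k j v - 1 / real n) / 3)"
    by (intro suminf_divide[symmetric] summable_sum) (auto intro: summable_green)
  also have "\<dots> = (\<Sum>k. P (Suc k) i v - 1 / real n)"
    using walk_op_affine[OF regular i, of 1 _ "- 1 / real n"]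
    by (simp add: walk_prob_Suc walk_op_def diff_divide_distrib)
  also have "\<dots> = green i - (P 0 i v - 1 / real n)"
    unfolding green_def by (rule suminf_split_head) (rule summable_green[OF i])
  finally show ?thesis
    by (simp add: walk_prob_0)
qed

lemma sum_green: "(\<Sum>i<n. green i) = 0"
proof -
  have "(\<Sum>i<n. green i) = (\<Sum>k. \<Sum>i<n. P k i v - 1 / real n)"
    unfolding green_def by (subst suminf_sum) (auto intro: summable_green)
  also have "\<dots> = 0"
    using n2 by (simp add: sum_subtractf sum_walk_prob_col)
  finally show ?thesis .
qed

text \<open>Maximum principle: \<open>green\<close> is subharmonic off \<open>v\<close>.\<close>

lemma green_le_green_v: "i < n \<Longrightarrow> green i \<le> green v"
proof (rule ccontr)
  assume i: "i < n" and "\<not> green i \<le> green v"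
  define M where "M = Max (green ` {..<n})"
  have "green ` {..<n} \<noteq> {}"
    using i by auto
  then have "M \<in> green ` {..<n}"
    unfolding M_def by (intro Max_in) auto
  then obtain i0 where i0: "i0 < n" "green i0 = M"
    by (metis imageE lessThan_iff)
  have le_M: "green j \<le> M" if "j < n" for j
    unfolding M_def using that by (intro Max_ge) auto
  have "i0 \<noteq> v"
    using le_M[OF i] \<open>\<not> green i \<le> green v\<close> i0 by auto
  then have "M + 1 / real n = R green i0"
    using walk_op_green[OF i0(1)] i0 by simp
  also have "\<dots> \<le> R (\<lambda>_. M) i0"
    by (rule walk_op_mono) (rule le_M)
  also have "\<dots> = M"
    by (rule walk_op_const[OF regular i0(1)])
  finally show False
    using n2 by simp
qed

lemma green_v_nonneg: "0 \<le> green v"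
proof -
  have "0 = (\<Sum>i<n. green i)"
    using sum_green by simp
  also have "\<dots> \<le> (\<Sum>i<n. green v)"
    by (intro sum_mono green_le_green_v) simp
  finally show ?thesis
    using n2 by (simp add: zero_le_mult_iff)
qed

text \<open>A positive function on which \<open>Q\<close> acts almost as multiplication by \<open>1 - 1/n\<close>: it is
  harmonic for the walk on \<open>H\<close> up to a source at \<open>v\<close> that compensates the killing there.\<close>

definition profile :: "nat \<Rightarrow> real" where
  "profile i = 1 - green i / (1 + green v)"

lemma profile_v: "profile v = 1 / (1 + green v)"
  using green_v_nonneg by (simp add: profile_def field_simps)

lemma profile_ge: "i < n \<Longrightarrow> 1 / (1 + green v) \<le> profile i"
proof -
  assume "i < n"
  then have "green i / (1 + green v) \<le> green v / (1 + green v)"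
    using green_le_green_v green_v_nonneg by (intro divide_right_mono) auto
  then show ?thesis
    using profile_v by (simp add: profile_def)
qed

lemma profile_le: "i < n \<Longrightarrow> profile i \<le> 1 + G"
proof -
  assume "i < n"
  have "- green i / (1 + green v) \<le> \<bar>green i\<bar> / (1 + green v)"
    using green_v_nonneg by (intro divide_right_mono) auto
  also have "\<dots> \<le> \<bar>green i\<bar>"
    using green_v_nonneg by (simp add: divide_le_eq algebra_simps)
  also have "\<dots> \<le> G"
    using abs_green_le[OF \<open>i < n\<close>] .
  finally show ?thesis
    by (simp add: profile_def)
qed

lemma profile_v_ge: "1 / (1 + G) \<le> profile v"
  using abs_green_le[OF v] green_v_nonneg unfolding profile_v
  by (intro divide_left_mono) auto

lemma Q_profile_ge:
  assumes i: "i < n"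
  shows "(1 - 1 / real n) * profile i \<le> Q profile i"
proof -
  let ?\<alpha> = "1 / (1 + green v)"
  have "profile = (\<lambda>j. (- ?\<alpha>) * green j + 1)"
    by (simp add: profile_def fun_eq_iff)
  then have R: "R profile i = profile i + ?\<alpha> * ((if i = v then 1 else 0) - 1 / real n)"
    using walk_op_affine[OF regular i, of "- ?\<alpha>" green 1] walk_op_green[OF i]
    by (simp add: profile_def algebra_simps)
  show ?thesis
  proof (cases "i = v")
    case True
    have "1 - 1 / real n \<le> 3/4 * (1 + (1 - 1 / real n))"
      using n2 by (simp add: field_simps)
    then have "(1 - 1 / real n) * ?\<alpha> \<le> (3/4 * (1 + (1 - 1 / real n))) * ?\<alpha>"
      using green_v_nonneg by (intro mult_right_mono) auto
    also have "\<dots> = 3/4 * (?\<alpha> + ?\<alpha> * (1 - 1 / real n))"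
      by (simp only: distrib_left distrib_right mult_ac)
    finally have "(1 - 1 / real n) * ?\<alpha> \<le> 3/4 * (?\<alpha> + ?\<alpha> * (1 - 1 / real n))" .
    then show ?thesis
      using True R profile_v by (simp add: weighted_walk_op_def)
  next
    case False
    have "?\<alpha> / real n \<le> profile i / real n"
      using profile_ge[OF i] by (intro divide_right_mono) auto
    then show ?thesis
      using False R by (simp add: weighted_walk_op_def algebra_simps)
  qed
qed

lemma Q_pow_profile_ge: "i < n \<Longrightarrow> (1 - 1 / real n) ^ m * profile i \<le> (Q ^^ m) profile i"
proof (induction m arbitrary: i)
  case (Suc m)
  have "(1 - 1 / real n) ^ Suc m * profile i \<le> (1 - 1 / real n) * (Q ^^ m) profile i"
    using Suc n2 by (simp add: mult_left_mono)
  also have "\<dots> = (Q ^^ m) (\<lambda>j. (1 - 1 / real n) * profile j) i"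
    by (rule weighted_walk_op_pow_scale[symmetric])
  also have "\<dots> \<le> (Q ^^ m) (Q profile) i"
    using Suc.prems by (intro weighted_walk_op_pow_mono Q_profile_ge) auto
  finally show ?case
    by (simp add: funpow_Suc_right del: funpow.simps)
qed simp

theorem survival_ge: "(1 - 1 / real n) ^ m / (1 + G)\<^sup>2 \<le> (Q ^^ m) (\<lambda>_. 1) v"
proof -
  have "(1 - 1 / real n) ^ m / (1 + G)\<^sup>2 = (1 - 1 / real n) ^ m * (1 / (1 + G)) / (1 + G)"
    by (simp add: power2_eq_square)
  also have "\<dots> \<le> (1 - 1 / real n) ^ m * profile v / (1 + G)"
    using profile_v_ge n2 G_pos by (intro divide_right_mono mult_left_mono) auto
  also have "\<dots> \<le> (Q ^^ m) profile v / (1 + G)"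
    using Q_pow_profile_ge[OF v] G_pos by (intro divide_right_mono) auto
  also have "\<dots> \<le> (Q ^^ m) (\<lambda>_. (1 + G) * 1) v / (1 + G)"
    using profile_le v G_pos by (intro divide_right_mono weighted_walk_op_pow_mono) auto
  also have "\<dots> = (Q ^^ m) (\<lambda>_. 1) v"
  proof -
    have G1: "1 + G \<noteq> 0"
      using G_pos by linarith
    show ?thesis
      by (simp only: weighted_walk_op_pow_scale nonzero_mult_div_cancel_left[OF G1])
  qed
  finally show ?thesis .
qed

lemma Q_pow_one_le: "i < n \<Longrightarrow> (Q ^^ m) (\<lambda>_. 1) i \<le> 1"
proof (induction m arbitrary: i)
  case (Suc m)
  have "(Q ^^ Suc m) (\<lambda>_. 1) i \<le> (Q ^^ m) (\<lambda>_. 1) i"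
    using Suc.prems walk_op_const[OF regular]
    by (simp only: funpow_Suc_right comp_def, intro weighted_walk_op_pow_mono)
      (auto simp: weighted_walk_op_def)
  then show ?case
    using Suc.IH[OF Suc.prems] by linarith
qed simp

abbreviation "\<delta>\<^sub>v \<equiv> (\<lambda>j. if j = v then 1 else (0::real))"

lemma mean_visits_le:
  assumes i: "i < n"
  shows "mean_visits n E v s i \<le> real s / (real n)\<^sup>2 + 2 * G / real n + real s * r ^ s"
proof -
  have "(\<Sum>k<s. r ^ (s - k)) \<le> (\<Sum>k<s. r ^ (s - Suc k))"
    using r_pos r_less_1 by (intro sum_mono power_decreasing) auto
  also have "\<dots> = (\<Sum>k<s. r ^ k)"
    by (rule sum.nat_diff_reindex)
  finally have reversed: "(\<Sum>k<s. r ^ (s - k)) \<le> G"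
    using sum_powers_r_le[of s] by linarith
  have upper: "P k j v \<le> 1 / real n + r ^ k" if "j < n" for j k
    using mixing[OF that v, of k] by linarith
  have "mean_visits n E v s i \<le> (\<Sum>k<s. (1 / real n + r ^ k) * (1 / real n + r ^ (s - k)))"
    unfolding mean_visits_def using i v r_pos
    by (intro sum_mono mult_mono walk_prob_nonneg upper) auto
  also have "\<dots> = real s / (real n)\<^sup>2 + (\<Sum>k<s. r ^ k) / real n + (\<Sum>k<s. r ^ (s - k)) / real n
      + real s * r ^ s"
    by (simp add: sum.distrib sum_divide_distrib algebra_simps power2_eq_square power_add[symmetric])
  also have "\<dots> \<le> real s / (real n)\<^sup>2 + 2 * G / real n + real s * r ^ s"
  proof -
    have "(\<Sum>k<s. r ^ k) / real n + (\<Sum>k<s. r ^ (s - k)) / real n \<le> G / real n + G / real n"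
      using sum_powers_r_le[of s] reversed by (intro add_mono divide_right_mono) auto
    moreover have "G / real n + G / real n = 2 * G / real n"
      by (metis add_divide_distrib mult_2)
    ultimately show ?thesis
      by linarith
  qed
  finally show ?thesis .
qed

text \<open>After \<open>n\<close> steps the walk sits at \<open>v\<close> with probability about \<open>1/n\<close>, while it has
  visited \<open>v\<close> only \<open>O(1/n)\<close> times on average.\<close>

lemma Q_pow_n_delta_ge:
  assumes i: "i < n" and rn: "2 * (real n)\<^sup>2 * r ^ n \<le> 1" and A: "8 * (1 + G) \<le> real A"
  shows "(3/4) ^ A / (4 * real n) \<le> (Q ^^ n) \<delta>\<^sub>v i"
proof -
  have A0: "0 < A"
    using A G_pos by (cases A) auto
  have n0: "0 < real n"
    using n2 by simp
  have rn1: "real n * r ^ n \<le> 1 / (2 * real n)"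
    using rn n0 by (simp add: field_simps power2_eq_square)
  have "r ^ n \<le> real n * r ^ n"
    using n2 r_pos by (simp add: mult_le_cancel_right1)
  with rn1 have "r ^ n \<le> 1 / (2 * real n)"
    by linarith
  then have "1 / (2 * real n) \<le> P n i v"
    using mixing[OF i v, of n] n0 by (simp add: abs_le_iff field_simps)
  moreover have "mean_visits n E v n i / real A \<le> 1 / (4 * real n)"
  proof -
    have frac: "1 / real n + 2 * x / real n + 1 / (2 * real n) \<le> 8 * (1 + x) / (4 * real n)" for x
      using n0 by (simp add: field_simps)
    have "mean_visits n E v n i \<le> 1 / real n + 2 * G / real n + 1 / (2 * real n)"
      using mean_visits_le[OF i, of n] rn1 n0 by (simp add: power2_eq_square)
    also have "\<dots> \<le> 8 * (1 + G) / (4 * real n)"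
      by (rule frac)
    also have "\<dots> \<le> real A / (4 * real n)"
      using A n0 by (intro divide_right_mono) auto
    finally show ?thesis
      using A0 n0 by (simp add: field_simps)
  qed
  ultimately have "(3/4) ^ A * (1 / (4 * real n)) \<le> (3/4) ^ A * (P n i v - mean_visits n E v n i / real A)"
    by (intro mult_left_mono) auto
  also have "\<dots> \<le> (Q ^^ n) \<delta>\<^sub>v i"
    using A0 by (intro weighted_walk_op_pow_delta_ge) auto
  finally show ?thesis
    by simp
qed

theorem return_ge_survival:
  assumes m: "n \<le> m" and rn: "2 * (real n)\<^sup>2 * r ^ n \<le> 1" and A: "8 * (1 + G) \<le> real A"
  shows "(3/4) ^ A / (4 * real n) * (Q ^^ m) (\<lambda>_. 1) v \<le> (Q ^^ m) \<delta>\<^sub>v v"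
proof -
  define c where "c = (3/4::real) ^ A / (4 * real n)"
  have split: "Q ^^ m = (Q ^^ (m - n)) \<circ> (Q ^^ n)"
    using m by (simp flip: funpow_add)
  have "(Q ^^ m) (\<lambda>_. 1) v \<le> (Q ^^ (m - n)) (\<lambda>_. 1) v"
    unfolding split comp_def using Q_pow_one_le v by (intro weighted_walk_op_pow_mono) auto
  then have "c * (Q ^^ m) (\<lambda>_. 1) v \<le> c * (Q ^^ (m - n)) (\<lambda>_. 1) v"
    by (intro mult_left_mono) (auto simp: c_def)
  also have "\<dots> = (Q ^^ (m - n)) (\<lambda>_. c * 1) v"
    by (rule weighted_walk_op_pow_scale[symmetric])
  also have "\<dots> \<le> (Q ^^ m) \<delta>\<^sub>v v"
    unfolding split comp_def using Q_pow_n_delta_ge[OF _ rn A] v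
    by (intro weighted_walk_op_pow_mono) (auto simp: c_def)
  finally show ?thesis
    by (simp add: c_def)
qed

end

theorem return_ratio_ge:
  fixes \<rho> r :: real
  assumes r_pos: "0 < r" and r_less_1: "r < 1" and rho_le: "\<rho> \<le> r"
    and regular: "three_regular n E" and eigs: "nontrivial_eigs_bounded (trans_mat3 n E) \<rho>"
    and v: "v < n" and n2: "2 \<le> n" and rn: "2 * (real n)\<^sup>2 * r ^ n \<le> 1"
    and A: "8 * (1 + 1 / (1 - r)) \<le> real A"
    and t: "n + 2 \<le> t" "4 \<le> t"
    and survival: "2 / sqrt (real t - 2) \<le> (1 - 1 / real n) ^ (t - 2) / (1 + 1 / (1 - r))\<^sup>2"
  shows "(3/4) ^ A / (32 * real n) \<le>
    return_time_eq (Gt_adj n E v) (Inl 0) t / return_time_ge (Gt_adj n E v) (Inl 0) t"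
proof -
  interpret S: spectral_gap n E \<rho> r
    by unfold_locales (use assms in auto)
  interpret M: mixing_graph n E v r
    by unfold_locales (use assms S.walk_prob_close_uniform in auto)
  interpret Gt: Gt_graph n E v
    by unfold_locales (use assms in auto)
  define m where "m = t - 2"
  have tm: "t = Suc (Suc m)" and m2: "2 \<le> m" and nm: "n \<le> m"
    using t by (auto simp: m_def)
  define S where "S = (M.Q ^^ m) (\<lambda>_. 1) v"
  define c where "c = (3/4::real) ^ A / (32 * real n)"
  have "2 / sqrt (real m) \<le> (1 - 1 / real n) ^ m / (1 + M.G)\<^sup>2"
    using survival t by (simp add: m_def of_nat_diff)
  also have "\<dots> \<le> S"
    unfolding S_def by (rule M.survival_ge)
  finally have survival_S: "2 / sqrt (real m) \<le> S" .
  moreover have "0 < 2 / sqrt (real m)"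
    using m2 by simp
  ultimately have S_pos: "0 < S"
    by linarith
  have "return_time_ge Gt.adj (Inl 0) t \<le> S"
    using halfline_op_pow_one_le_sqrt[OF m2] survival_S by (simp add: tm Gt.return_time_ge_Gt S_def)
  then have "c * return_time_ge Gt.adj (Inl 0) t \<le> c * S"
    by (rule mult_left_mono) (simp add: c_def)
  also have "\<dots> \<le> return_time_eq Gt.adj (Inl 0) t"
    using M.return_ge_survival[OF nm rn A] Gt.return_time_eq_Gt_ge[of m] by (simp add: tm S_def c_def)
  finally have "c * return_time_ge Gt.adj (Inl 0) t \<le> return_time_eq Gt.adj (Inl 0) t" .
  moreover have "0 < return_time_ge Gt.adj (Inl 0) t"
    using halfline_op_pow_nonneg[of "\<lambda>_. 1" m 1] S_pos by (simp add: tm Gt.return_time_ge_Gt S_def)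
  ultimately show ?thesis
    by (simp add: c_def pos_le_divide_eq)
qed

lemma one_minus_inverse_pow_ge:
  fixes t :: nat
  assumes n2: "2 \<le> n" and window: "8 * real t / ln (real t) \<le> real n" and t4: "4 \<le> t"
  shows "real t powr (-1/4) \<le> (1 - 1 / real n) ^ t"
proof -
  define x where "x = 1 / real n"
  have x: "0 \<le> x" "x \<le> 1/2"
    using n2 by (auto simp: x_def)
  have "- 2 * x \<le> - x - 2 * x\<^sup>2"
    using x mult_left_mono[of x "1/2" x] by (simp add: power2_eq_square)
  also have "\<dots> \<le> ln (1 - x)"
    by (rule ln_one_minus_pos_lower_bound[OF x])
  finally have ln_ge: "- 2 * x \<le> ln (1 - x)" .
  have "0 < ln (real t)"
    using t4 by simp
  then have "real t * x \<le> ln (real t) / 8"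
    using window n2 by (simp add: x_def field_simps)
  then have "-(1/4) * ln (real t) \<le> real t * ln (1 - x)"
    using mult_left_mono[OF ln_ge, of "real t"] by simp
  then have "exp (-(1/4) * ln (real t)) \<le> exp (real t * ln (1 - x))"
    by simp
  also have "exp (real t * ln (1 - x)) = (1 - x) ^ t"
    using x by (simp add: ln_realpow[symmetric])
  finally show ?thesis
    using t4 by (simp add: powr_def x_def)
qed

lemma eventually_window_conditions:
  fixes r c :: real
  assumes r: "0 < r" "r < 1" and c: "0 < c"
  shows "eventually (\<lambda>t. 4 \<le> t \<and> (\<forall>n. 8 * real t / ln (real t) \<le> real n \<and>
      real n \<le> 8 * real t / ln (real t) + 2 \<longrightarrow>
        2 \<le> n \<and> 2 * (real n)\<^sup>2 * r ^ n \<le> 1 \<and> n + 2 \<le> t \<and>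
        2 / sqrt (real t - 2) \<le> c * (1 - 1 / real n) ^ (t - 2) \<and>
        real n * ln (real t) \<le> 16 * real t)) sequentially"
proof -
  have "((\<lambda>k::nat. 2 * real k ^ 2 * r ^ k) \<longlongrightarrow> 0) sequentially"
    using r by real_asymp
  then have "eventually (\<lambda>k. 2 * real k ^ 2 * r ^ k < 1) sequentially"
    by (rule order_tendstoD) simp
  then obtain N where "\<forall>k\<ge>N. 2 * real k ^ 2 * r ^ k < 1"
    by (auto simp: eventually_sequentially)
  then have N: "2 * (real k)\<^sup>2 * r ^ k \<le> 1" if "N \<le> k" for k
    using that by (simp add: less_imp_le)
  have "filterlim (\<lambda>t::nat. 8 * real t / ln (real t)) at_top sequentially"
    by real_asymp
  then have "eventually (\<lambda>t::nat. real (max N 2) \<le> 8 * real t / ln (real t)) sequentially"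
    by (simp add: filterlim_at_top)
  moreover have "eventually (\<lambda>t::nat. 8 * real t / ln (real t) + 2 \<le> real t - 2) sequentially"
    by real_asymp
  moreover have "((\<lambda>t::nat. 2 / sqrt (real t - 2) * real t powr (1/4)) \<longlongrightarrow> 0) sequentially"
    by real_asymp
  then have "eventually (\<lambda>t::nat. 2 / sqrt (real t - 2) * real t powr (1/4) < c) sequentially"
    using c by (rule order_tendstoD(2))
  moreover have "eventually (\<lambda>t::nat. 4 \<le> t) sequentially"
    by (rule eventually_ge_at_top)
  ultimately show ?thesis
  proof eventually_elim
    case (elim t)
    have t_pos: "0 < real t" and ln_pos: "0 < ln (real t)"
      using elim by auto
    show ?case
    proof (intro conjI allI impI)
      fix n
      assume n: "8 * real t / ln (real t) \<le> real n \<and> real n \<le> 8 * real t / ln (real t) + 2"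
      then show n2: "2 \<le> n" and "2 * (real n)\<^sup>2 * r ^ n \<le> 1"
        using elim N[of n] by auto
      show "n + 2 \<le> t"
        using elim n by linarith
      have "(1 - 1 / real n) ^ t \<le> (1 - 1 / real n) ^ (t - 2)"
        using n2 by (intro power_decreasing) auto
      then have "real t powr (-1/4) \<le> (1 - 1 / real n) ^ (t - 2)"
        using one_minus_inverse_pow_ge[OF n2 _ elim(4)] n by linarith
      then have "c * real t powr (-1/4) \<le> c * (1 - 1 / real n) ^ (t - 2)"
        using c by simp
      moreover have "2 / sqrt (real t - 2) = (2 / sqrt (real t - 2) * real t powr (1/4)) * real t powr (-1/4)"
        using t_pos by (simp add: powr_minus field_simps)
      moreover have "\<dots> \<le> c * real t powr (-1/4)"
        using elim(3) by (intro mult_right_mono) auto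
      ultimately show "2 / sqrt (real t - 2) \<le> c * (1 - 1 / real n) ^ (t - 2)"
        by linarith
      have "real 2 \<le> real (max N 2)" and "16 * real t / ln (real t) = 2 * (8 * real t / ln (real t))"
        by simp_all
      then have "real n \<le> 16 * real t / ln (real t)"
        using elim(1) n by linarith
      then show "real n * ln (real t) \<le> 16 * real t"
        using ln_pos by (simp add: field_simps)
    qed (use elim in simp)
  qed
qed

lemma eventually_return_ratio_ge:
  fixes \<rho> r :: real
  assumes r: "0 < r" "r < 1" "\<rho> \<le> r" and A: "8 * (1 + 1 / (1 - r)) \<le> real A"
  shows "eventually (\<lambda>t. \<forall>n E v.
      8 * real t / ln (real t) \<le> real n \<and> real n \<le> 8 * real t / ln (real t) + 2 \<and>
      three_regular n E \<and> nontrivial_eigs_bounded (trans_mat3 n E) \<rho> \<and> v < n \<longrightarrow>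
      (3/4) ^ A / 512 * ln (real t) / real t \<le>
        return_time_eq (Gt_adj n E v) (Inl 0) t / return_time_ge (Gt_adj n E v) (Inl 0) t) sequentially"
proof -
  have "0 < 1 / (1 - r)"
    using r by simp
  then have "0 < 1 / (1 + 1 / (1 - r))\<^sup>2"
    by (intro divide_pos_pos zero_less_power add_pos_pos) auto
  from eventually_window_conditions[OF r(1,2) this] show ?thesis
  proof (rule eventually_mono, goal_cases)
    case (1 t)
    show ?case
    proof (intro allI impI, elim conjE)
      fix n E v
      assume "8 * real t / ln (real t) \<le> real n" "real n \<le> 8 * real t / ln (real t) + 2"
        and graph: "three_regular n E" "nontrivial_eigs_bounded (trans_mat3 n E) \<rho>" "v < n"
      with 1 have window: "4 \<le> t" "2 \<le> n" "2 * (real n)\<^sup>2 * r ^ n \<le> 1" "n + 2 \<le> t"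
        "2 / sqrt (real t - 2) \<le> (1 - 1 / real n) ^ (t - 2) / (1 + 1 / (1 - r))\<^sup>2"
        "real n * ln (real t) \<le> 16 * real t"
        by auto
      then have "(3/4) ^ A / 512 * ln (real t) / real t \<le> (3/4) ^ A / (32 * real n)"
        by (simp add: field_simps)
      also have "\<dots> \<le> return_time_eq (Gt_adj n E v) (Inl 0) t / return_time_ge (Gt_adj n E v) (Inl 0) t"
        using window graph r A by (intro return_ratio_ge) auto
      finally show "(3/4) ^ A / 512 * ln (real t) / real t \<le>
        return_time_eq (Gt_adj n E v) (Inl 0) t / return_time_ge (Gt_adj n E v) (Inl 0) t" .
    qed
  qed
qed

theorem theorem4p1:
  fixes \<rho> :: real
  assumes "\<rho> < 1"
  shows "\<exists>K c :: real. K > 0 \<and> c > 0 \<and> (\<exists>T::nat. \<forall>t\<ge>T.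
     \<forall>(n::nat) (E :: nat \<Rightarrow> nat \<Rightarrow> bool) (v::nat).
       K * real t / ln (real t) \<le> real n \<and> real n \<le> K * real t / ln (real t) + 2 \<and>
       three_regular n E \<and> nontrivial_eigs_bounded (trans_mat3 n E) \<rho> \<and> v < n \<longrightarrow>
       return_time_eq (Gt_adj n E v) (Inl 0) t / return_time_ge (Gt_adj n E v) (Inl 0) t
         \<ge> c * ln (real t) / real t)"
proof -
  define r where "r = max \<rho> (1/2)"
  define A where "A = nat \<lceil>8 * (1 + 1 / (1 - r))\<rceil>"
  have "0 < r" "r < 1" "\<rho> \<le> r"
    using assms by (auto simp: r_def)
  moreover have "8 * (1 + 1 / (1 - r)) \<le> real A"
    unfolding A_def by linarith
  ultimately obtain T where T: "\<forall>t\<ge>T. \<forall>n E v.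
      8 * real t / ln (real t) \<le> real n \<and> real n \<le> 8 * real t / ln (real t) + 2 \<and>
      three_regular n E \<and> nontrivial_eigs_bounded (trans_mat3 n E) \<rho> \<and> v < n \<longrightarrow>
      (3/4) ^ A / 512 * ln (real t) / real t \<le>
        return_time_eq (Gt_adj n E v) (Inl 0) t / return_time_ge (Gt_adj n E v) (Inl 0) t"
    using eventually_return_ratio_ge unfolding eventually_sequentially by blast
  show ?thesis
    by (rule exI[where x=8], rule exI[where x="(3/4) ^ A / 512"]) (use T in auto)
qed

end
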